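(* Let $R\subseteq S$, $\sigma$ be as in the context, $n=n_1+\cdots+n_\ell$. Let $\mathbf{a}=(a_1,\ldots,a_\ell)\in(S^* )^\ell$ and $\beta_{i,j}\in S$ ($1\le i\le\ell$, $1\le j\le n_i$) satisfy: (i) $a_i-a_j^\beta\in S^*$ for all $\beta\in S^*$ and $1\le i<j\le\ell$; (ii) for each $i$, $\beta_{i,1},\ldots,\beta_{i,n_i}$ are $R$-linearly independent. Let $b_{i,j}=\sigma(\beta_{i,j})a_i\beta_{i,j}^{-1}$. Fix $1\le k\le n-1$ and $t=\lfloor (n-k)/2\rfloor$. Let $\mathbf{c}\in\mathcal{C}_k(\mathbf{a},\boldsymbol\beta)$, let $\mathbf{e}\in S^n$ with ${\rm wt}_{SR}(\mathbf{e})\le t$, and $\mathbf{r}=\mathbf{c}+\mathbf{e}$. Write $c_{i,j},e_{i,j},r_{i,j}$ for the coordinates indexed by $(i,j)$. Let $F,G,H\in S[x;\sigma]$ be the unique skew polynomials of degree less than $n$ with $F(b_{i,j})=c_{i,j}\beta_{i,j}^{-1}$, $G(b_{i,j})=e_{i,j}\beta_{i,j}^{-1}$, $H(b_{i,j})=r_{i,j}\beta_{i,j}^{-1}$ for all $i,j$. Then there exists a non-zero monic $L\in S[x;\sigma]$ with $\deg(L)\le t$ such that $(LH)(b_{i,j})=(LF)(b_{i,j})$ for all $i,j$. In particular, there exist non-zero $L,Q\in S[x;\sigma]$ with $L$ monic, $\deg(L)\le t$, $\deg(Q)\le t+k-1$, and $(LH)(b_{i,j})=Q(b_{i,j})$ for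 all $1\le j\le n_i$, $1\le i\le\ell$.
   Context: $R$ is a finite commutative chain ring with maximal ideal $\mathfrak{m}$, $q=|R/\mathfrak{m}|$; $S=R[x]/(h)$ with $h$ monic of degree $m$ irreducible modulo $\mathfrak{m}$, local with maximal ideal $\mathfrak{M}=\mathfrak{m}S$ and unit group $S^*=S\setminus\mathfrak{M}$. $\sigma$ is a ring automorphism of $S$ generating the Galois group of $R\subseteq S$, with fixed ring $R$, reducing modulo $\mathfrak{M}$ to $y\mapsto y^q$. $S[x;\sigma]$ is the skew polynomial ring with $xa=\sigma(a)x$. Remainder evaluation: for $P\in S[x;\sigma]$ and $b\in S$, $P(b)$ is the unique $c\in S$ with $P=Q'(x-b)+c$ for some $Q'\in S[x;\sigma]$. For $a\in S$, $\beta\in S^*$: $a^\beta=\sigma(\beta)a\beta^{-1}$; $N_s(a)=\sigma^{s-1}(a)\cdots a$, $\mathcal{D}_a^s(\beta)=\sigma^s(\beta)N_s(a)$. The linearized Reed–Solomon code $\mathcal{C}_k(\mathbf{a},\boldsymbol\beta)\subseteq S^n$ is the $S$-row span of the $k\times n$ matrix with rows $s=0,\ldots,k-1$ and columns $(i,j)$ (ordered $(1,1),\ldots,(1,n_1),\ldots,(\ell,n_\ell)$), entry $\mathcal{D}_{a_i}^s(\beta_{i,j})$. Sum-rank weight: for $\mathbf{u}\in S^s$, ${\rm rk}(\mathbf{u})$ is the number of nonzero diagonal entries of the Smith normal form over $R$ of the $m\times s$ coordinate matrix of $\mathbf{u}$ in an $R$-basis of $S$; for $\mathbf{e}=(\mathbf{e}^{(1)},\ldots,\mathbf{e}^{(\ell)})$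 with $\mathbf{e}^{(i)}\in S^{n_i}$, ${\rm wt}_{SR}(\mathbf{e})=\sum_i{\rm rk}(\mathbf{e}^{(i)})$. *)

theory Defs
  imports "HOL-Computational_Algebra.Polynomial"
begin

section \<open>Ring-theoretic setting: R a subring of the finite commutative ring S (the type)\<close>

definition subring_of :: "'a::comm_ring_1 set \<Rightarrow> bool" where
  "subring_of R \<longleftrightarrow> 0 \<in> R \<and> 1 \<in> R \<and> (\<forall>x\<in>R. \<forall>y\<in>R. x + y \<in> R \<and> x * y \<in> R \<and> - x \<in> R)"

definition ideal_of :: "'a::comm_ring_1 set \<Rightarrow> 'a set \<Rightarrow> bool" where
  "ideal_of R I \<longleftrightarrow> I \<subseteq> R \<and> 0 \<in> I \<and> (\<forall>x\<in>I. \<forall>y\<in>I. x + y \<in> I) \<and> (\<forall>r\<in>R. \<forall>x\<in>I. r * x \<in> I)"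

definition chain_ring :: "'a::comm_ring_1 set \<Rightarrow> bool" where
  "chain_ring R \<longleftrightarrow> subring_of R \<and> (\<forall>I J. ideal_of R I \<longrightarrow> ideal_of R J \<longrightarrow> I \<subseteq> J \<or> J \<subseteq> I)"

definition max_ideal :: "'a::comm_ring_1 set \<Rightarrow> 'a set" where
  "max_ideal R = {x \<in> R. \<not> (\<exists>y\<in>R. x * y = 1)}"

definition res_card :: "'a::comm_ring_1 set \<Rightarrow> nat" where
  "res_card R = card ((\<lambda>x. {x + y |y. y \<in> max_ideal R}) ` R)"

definition ext_ideal :: "'a::comm_ring_1 set \<Rightarrow> 'a set" where
  "ext_ideal R = {x. \<exists>(N::nat) f g. (\<forall>i<N. f i \<in> max_ideal R) \<and> x = (\<Sum>i<N. f i * g i)}"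

definition S_units :: "'a::comm_ring_1 set" where
  "S_units = {x. \<exists>y. x * y = 1}"

definition sinv :: "'a::comm_ring_1 \<Rightarrow> 'a" where
  "sinv x = (THE y. x * y = 1)"

text \<open>h is irreducible modulo m: its reduction has no factorisation into two
  non-constant (w.l.o.g. monic) factors.\<close>
definition irred_mod :: "'a::comm_ring_1 set \<Rightarrow> 'a poly \<Rightarrow> bool" where
  "irred_mod R h \<longleftrightarrow> degree h \<ge> 1 \<and>
     \<not> (\<exists>f g. (\<forall>i. coeff f i \<in> R) \<and> (\<forall>i. coeff g i \<in> R) \<and>
             lead_coeff f = 1 \<and> lead_coeff g = 1 \<and> degree f \<ge> 1 \<and> degree g \<ge> 1 \<and>
             (\<forall>i. coeff (h - f * g) i \<in> max_ideal R))"

text \<open>S = R[x]/(h): S is a free R-module with basis 1, theta, ..., theta^(m-1), where h(theta) = 0.\<close>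
definition R_basis :: "'a::comm_ring_1 set \<Rightarrow> nat \<Rightarrow> (nat \<Rightarrow> 'a) \<Rightarrow> bool" where
  "R_basis R m B \<longleftrightarrow> (\<forall>x. \<exists>!c. (\<forall>i<m. c i \<in> R) \<and> (\<forall>i\<ge>m. c i = 0) \<and> x = (\<Sum>i<m. c i * B i))"

definition coord :: "'a::comm_ring_1 set \<Rightarrow> nat \<Rightarrow> (nat \<Rightarrow> 'a) \<Rightarrow> 'a \<Rightarrow> nat \<Rightarrow> 'a" where
  "coord R m B x = (THE c. (\<forall>i<m. c i \<in> R) \<and> (\<forall>i\<ge>m. c i = 0) \<and> x = (\<Sum>i<m. c i * B i))"

definition ring_aut :: "('a::comm_ring_1 \<Rightarrow> 'a) \<Rightarrow> bool" where
  "ring_aut \<tau> \<longleftrightarrow> bij \<tau> \<and> (\<forall>x y. \<tau> (x + y) = \<tau> x + \<tau> y) \<and> (\<forall>x y. \<tau> (x * y) = \<tau> x * \<tau> y) \<and> \<tau> 1 = 1"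

definition galois_setting ::
  "'a::{comm_ring_1,finite} set \<Rightarrow> 'a poly \<Rightarrow> nat \<Rightarrow> 'a \<Rightarrow> ('a \<Rightarrow> 'a) \<Rightarrow> bool" where
  "galois_setting R h m \<theta> \<sigma> \<longleftrightarrow>
     chain_ring R \<and>
     (\<forall>i. coeff h i \<in> R) \<and> lead_coeff h = 1 \<and> degree h = m \<and> irred_mod R h \<and>
     poly h \<theta> = 0 \<and> R_basis R m (\<lambda>i. \<theta> ^ i) \<and>
     ring_aut \<sigma> \<and> {x. \<sigma> x = x} = R \<and>
     (\<forall>\<tau>. ring_aut \<tau> \<and> (\<forall>r\<in>R. \<tau> r = r) \<longrightarrow> (\<exists>i. \<tau> = \<sigma> ^^ i)) \<and>
     (\<forall>y. \<sigma> y - y ^ res_card R \<in> ext_ideal R)"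

definition mat_mul :: "(nat \<Rightarrow> nat \<Rightarrow> 'a::comm_ring_1) \<Rightarrow> (nat \<Rightarrow> nat \<Rightarrow> 'a) \<Rightarrow> nat \<Rightarrow> nat \<Rightarrow> nat \<Rightarrow> 'a" where
  "mat_mul A B p = (\<lambda>i k. \<Sum>j<p. A i j * B j k)"

definition mat_over :: "'a set \<Rightarrow> nat \<Rightarrow> nat \<Rightarrow> (nat \<Rightarrow> nat \<Rightarrow> 'a) \<Rightarrow> bool" where
  "mat_over R d1 d2 A \<longleftrightarrow> (\<forall>i<d1. \<forall>j<d2. A i j \<in> R)"

definition invertible_over :: "'a::comm_ring_1 set \<Rightarrow> nat \<Rightarrow> (nat \<Rightarrow> nat \<Rightarrow> 'a) \<Rightarrow> bool" where
  "invertible_over R d P \<longleftrightarrow> mat_over R d d P \<and>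
     (\<exists>P'. mat_over R d d P' \<and>
        (\<forall>i<d. \<forall>j<d. mat_mul P P' d i j = (if i = j then 1 else 0)) \<and>
        (\<forall>i<d. \<forall>j<d. mat_mul P' P d i j = (if i = j then 1 else 0)))"

definition smith_form :: "'a::comm_ring_1 set \<Rightarrow> nat \<Rightarrow> nat \<Rightarrow> (nat \<Rightarrow> nat \<Rightarrow> 'a) \<Rightarrow> bool" where
  "smith_form R d1 d2 D \<longleftrightarrow> (\<forall>i<d1. \<forall>j<d2. i \<noteq> j \<longrightarrow> D i j = 0) \<and>
     (\<forall>i. Suc i < min d1 d2 \<longrightarrow> (\<exists>c\<in>R. D (Suc i) (Suc i) = D i i * c))"

definition snf_rank_is :: "'a::comm_ring_1 set \<Rightarrow> nat \<Rightarrow> nat \<Rightarrow> (nat \<Rightarrow> nat \<Rightarrow> 'a) \<Rightarrow> nat \<Rightarrow> bool" where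
  "snf_rank_is R d1 d2 A r \<longleftrightarrow> (\<exists>P Q. invertible_over R d1 P \<and> invertible_over R d2 Q \<and>
      smith_form R d1 d2 (mat_mul (mat_mul P A d1) Q d2) \<and>
      r = card {i. i < min d1 d2 \<and> mat_mul (mat_mul P A d1) Q d2 i i \<noteq> 0})"

definition rk :: "'a::comm_ring_1 set \<Rightarrow> nat \<Rightarrow> nat \<Rightarrow> (nat \<Rightarrow> 'a) \<Rightarrow> nat" where
  "rk R m s u = (THE r. \<exists>B. R_basis R m B \<and> snf_rank_is R m s (\<lambda>i j. coord R m B (u j) i) r)"

definition wt_SR :: "'a::comm_ring_1 set \<Rightarrow> nat \<Rightarrow> nat \<Rightarrow> (nat \<Rightarrow> nat) \<Rightarrow> (nat \<Rightarrow> nat \<Rightarrow> 'a) \<Rightarrow> nat" where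
  "wt_SR R m l nb e = (\<Sum>i=1..l. rk R m (nb i) (\<lambda>j. e i (Suc j)))"

section \<open>Skew polynomials S[x;sigma], represented by their coefficient sequences\<close>

definition skew_mult :: "('a::comm_ring_1 \<Rightarrow> 'a) \<Rightarrow> 'a poly \<Rightarrow> 'a poly \<Rightarrow> 'a poly" where
  "skew_mult \<sigma> p q = (\<Sum>i\<le>degree p. \<Sum>j\<le>degree q. monom (coeff p i * (\<sigma> ^^ i) (coeff q j)) (i + j))"

definition skew_eval :: "('a::comm_ring_1 \<Rightarrow> 'a) \<Rightarrow> 'a poly \<Rightarrow> 'a \<Rightarrow> 'a" where
  "skew_eval \<sigma> P b = (THE c. \<exists>Q'. P = skew_mult \<sigma> Q' [:- b, 1:] + [:c:])"

definition Nrm :: "('a::comm_ring_1 \<Rightarrow> 'a) \<Rightarrow> nat \<Rightarrow> 'a \<Rightarrow> 'a" where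
  "Nrm \<sigma> s a = (\<Prod>i<s. (\<sigma> ^^ i) a)"

definition Dop :: "('a::comm_ring_1 \<Rightarrow> 'a) \<Rightarrow> nat \<Rightarrow> 'a \<Rightarrow> 'a \<Rightarrow> 'a" where
  "Dop \<sigma> s a \<beta> = (\<sigma> ^^ s) \<beta> * Nrm \<sigma> s a"

definition sconj :: "('a::comm_ring_1 \<Rightarrow> 'a) \<Rightarrow> 'a \<Rightarrow> 'a \<Rightarrow> 'a" where
  "sconj \<sigma> a \<beta> = \<sigma> \<beta> * a * sinv \<beta>"

definition LRS_code :: "('a::comm_ring_1 \<Rightarrow> 'a) \<Rightarrow> nat \<Rightarrow> nat \<Rightarrow> (nat \<Rightarrow> nat) \<Rightarrow> (nat \<Rightarrow> 'a) \<Rightarrow> (nat \<Rightarrow> nat \<Rightarrow> 'a) \<Rightarrow> (nat \<Rightarrow> nat \<Rightarrow> 'a) set" where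
  "LRS_code \<sigma> k l nb a \<beta> = {c. \<exists>u. \<forall>i\<in>{1..l}. \<forall>j\<in>{1..nb i}. c i j = (\<Sum>s<k. u s * Dop \<sigma> s (a i) (\<beta> i j))}"

definition R_lin_indep :: "'a::comm_ring_1 set \<Rightarrow> nat \<Rightarrow> (nat \<Rightarrow> 'a) \<Rightarrow> bool" where
  "R_lin_indep R N v \<longleftrightarrow> (\<forall>c. (\<forall>j\<in>{1..N}. c j \<in> R) \<longrightarrow> (\<Sum>j=1..N. c j * v j) = 0 \<longrightarrow> (\<forall>j\<in>{1..N}. c j = 0))"

end

theory Submission
  imports Defs "HOL-Library.FuncSet"
begin

(* Evaluating a product at b = sigma(beta) a beta^-1 gives (L P)(b) = D_eval a L (P(b) beta) beta^-1,
   where D_eval a L y = sum_s L_s D_a^s(y) is R-linear in y. Since H - F interpolates e beta^-1, it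
   suffices to find a monic L of degree at most wt_SR(e) with D_eval (a i) L (e i j) = 0.
   A Smith normal form of the coordinate matrix of e^(i) writes e^(i) as an R-combination of at most
   rk(e^(i)) elements g; and because every nonzero element of S is pi^k u with u a unit, for each
   z there is alpha with sigma(z) a = alpha z, so left multiplication by x - alpha kills one more g
   while keeping the earlier ones. rk is well defined since the socle of the R-span of e^(i) has
   |socle R|^rk elements. For the second claim take Q = L F' with F' the message polynomial of c. *)

lemma S_units_iff: "x \<in> S_units \<longleftrightarrow> (\<exists>y. x * y = 1)"
  by (simp add: S_units_def)

lemma S_units_mult_iff: "x * y \<in> S_units \<longleftrightarrow> x \<in> S_units \<and> y \<in> S_units"
proof
  assume "x * y \<in> S_units"
  then obtain z where "x * y * z = 1" by (auto simp: S_units_iff)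
  then have "x * (y * z) = 1" "y * (x * z) = 1" by (simp_all add: ac_simps)
  then show "x \<in> S_units \<and> y \<in> S_units" by (auto simp: S_units_iff)
next
  assume "x \<in> S_units \<and> y \<in> S_units"
  then obtain a b where "x * a = 1" "y * b = 1" by (auto simp: S_units_iff)
  then have "x * y * (a * b) = 1" by (simp add: ac_simps)
  then show "x * y \<in> S_units" by (auto simp: S_units_iff)
qed

lemma S_units_uminus_iff: "- x \<in> S_units \<longleftrightarrow> x \<in> S_units"
proof -
  have "- x \<in> S_units" if x: "x \<in> S_units" for x :: 'a
  proof -
    obtain y where "x * y = 1" using x by (auto simp: S_units_iff)
    then have "- x * - y = 1" by simp
    then show ?thesis unfolding S_units_iff by blast
  qed
  from this[of x] this[of "- x"] show ?thesis by auto
qed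

lemma S_units_one [simp]: "1 \<in> S_units"
  by (simp add: S_units_iff)

lemma sinv_right: "x \<in> S_units \<Longrightarrow> x * sinv x = 1"
proof -
  assume "x \<in> S_units"
  then obtain y where y: "x * y = 1" by (auto simp: S_units_iff)
  have "\<exists>!y. x * y = 1"
  proof (rule ex1I[of _ y])
    fix z assume "x * z = 1"
    then have "y * (x * z) = y" by simp
    then show "z = y" using y by (simp add: mult.assoc[symmetric] mult.commute)
  qed (rule y)
  then show ?thesis unfolding sinv_def by (rule theI')
qed

lemma sinv_left: "x \<in> S_units \<Longrightarrow> sinv x * x = 1"
  using sinv_right by (simp add: mult.commute)

section \<open>Finite chain rings\<close>

locale finite_chain_ring =
  fixes R :: "'a::{comm_ring_1,finite} set"
  assumes chain: "chain_ring R"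
begin

lemma subring: "subring_of R"
  using chain unfolding chain_ring_def by auto

lemma zero_mem [simp]: "0 \<in> R" and one_mem [simp]: "1 \<in> R"
  using subring unfolding subring_of_def by auto

lemma add_mem [intro]: "x \<in> R \<Longrightarrow> y \<in> R \<Longrightarrow> x + y \<in> R"
  and mult_mem [intro]: "x \<in> R \<Longrightarrow> y \<in> R \<Longrightarrow> x * y \<in> R"
  and uminus_mem [intro]: "x \<in> R \<Longrightarrow> - x \<in> R"
  using subring unfolding subring_of_def by auto

lemma diff_mem [intro]: "x \<in> R \<Longrightarrow> y \<in> R \<Longrightarrow> x - y \<in> R"
  using add_mem[of x "- y"] by auto

lemma sum_mem [intro]: "(\<And>i. i \<in> I \<Longrightarrow> f i \<in> R) \<Longrightarrow> sum f I \<in> R"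
  by (induction I rule: infinite_finite_induct) auto

lemma power_mem [intro]: "x \<in> R \<Longrightarrow> x ^ n \<in> R"
  by (induction n) auto

definition dvd_in :: "'a \<Rightarrow> 'a \<Rightarrow> bool" where
  "dvd_in x y \<longleftrightarrow> (\<exists>z\<in>R. y = x * z)"

definition principal_ideal :: "'a \<Rightarrow> 'a set" where
  "principal_ideal x = {x * z |z. z \<in> R}"

lemma mem_principal_ideal_iff: "y \<in> principal_ideal x \<longleftrightarrow> dvd_in x y"
  unfolding principal_ideal_def dvd_in_def by blast

lemma mem_principal_ideal_self: "x \<in> principal_ideal x"
  unfolding mem_principal_ideal_iff dvd_in_def by (auto intro!: bexI[of _ 1])

lemma principal_ideal_subset: "dvd_in x y \<Longrightarrow> principal_ideal y \<subseteq> principal_ideal x"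
  unfolding principal_ideal_def dvd_in_def by (auto simp: mult.assoc)

lemma ideal_of_principal_ideal: "x \<in> R \<Longrightarrow> ideal_of R (principal_ideal x)"
  unfolding ideal_of_def principal_ideal_def
proof (intro conjI ballI)
  fix a b assume "a \<in> {x * z |z. z \<in> R}" "b \<in> {x * z |z. z \<in> R}"
  then obtain z1 z2 where "z1 \<in> R" "z2 \<in> R" "a = x * z1" "b = x * z2" by blast
  then show "a + b \<in> {x * z |z. z \<in> R}"
    by (intro CollectI exI[of _ "z1 + z2"]) (auto simp: distrib_left)
next
  fix r a assume r: "r \<in> R" and "a \<in> {x * z |z. z \<in> R}"
  then obtain z where "z \<in> R" "a = x * z" by blast
  then show "r * a \<in> {x * z |z. z \<in> R}"
    using r by (intro CollectI exI[of _ "r * z"]) (auto simp: mult.left_commute)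
qed (auto intro!: exI[of _ 0])

lemma dvd_in_sum: "(\<And>j. j \<in> J \<Longrightarrow> dvd_in x (f j)) \<Longrightarrow> dvd_in x (sum f J)"
proof (induction J rule: infinite_finite_induct)
  case (insert j J)
  then obtain z1 z2 where "z1 \<in> R" "f j = x * z1" "z2 \<in> R" "sum f J = x * z2"
    unfolding dvd_in_def by blast
  then show ?case using insert unfolding dvd_in_def
    by (auto intro!: bexI[of _ "z1 + z2"] simp: distrib_left)
qed (auto simp: dvd_in_def intro!: bexI[of _ 0])

lemma dvd_in_mult_left: "a \<in> R \<Longrightarrow> dvd_in x y \<Longrightarrow> dvd_in x (a * y)"
  unfolding dvd_in_def by (metis mult.left_commute mult_mem)

lemma dvd_in_mult_right: "a \<in> R \<Longrightarrow> dvd_in x y \<Longrightarrow> dvd_in x (y * a)"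
  using dvd_in_mult_left by (simp add: mult.commute)

lemma dvd_in_diff: "dvd_in x y \<Longrightarrow> dvd_in x z \<Longrightarrow> dvd_in x (y - z)"
  unfolding dvd_in_def by (auto simp: right_diff_distrib intro!: bexI[of _ "_ - _"])

lemma dvd_in_total:
  assumes "x \<in> R" "y \<in> R"
  shows "dvd_in x y \<or> dvd_in y x"
proof -
  have "principal_ideal x \<subseteq> principal_ideal y \<or> principal_ideal y \<subseteq> principal_ideal x"
    using chain ideal_of_principal_ideal assms unfolding chain_ring_def by blast
  then show ?thesis
    using mem_principal_ideal_self[of x] mem_principal_ideal_self[of y]
    unfolding mem_principal_ideal_iff[symmetric] by blast
qed

lemma exists_dvd_in_all:
  assumes "finite E" "E \<noteq> {}" "E \<subseteq> R"
  shows "\<exists>x\<in>E. \<forall>y\<in>E. dvd_in x y"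
proof -
  define M where "M = Max ((\<lambda>y. card (principal_ideal y)) ` E)"
  have "M \<in> (\<lambda>y. card (principal_ideal y)) ` E"
    unfolding M_def using assms(1,2) by (intro Max_in) auto
  then obtain p where p: "p \<in> E" and pM: "card (principal_ideal p) = M" by auto
  have p_max: "card (principal_ideal y) \<le> card (principal_ideal p)" if "y \<in> E" for y
    using Max_ge assms(1) that unfolding pM M_def by auto
  have "dvd_in p y" if y: "y \<in> E" for y
  proof (rule ccontr)
    assume "\<not> dvd_in p y"
    then have sub: "principal_ideal p \<subseteq> principal_ideal y"
      using dvd_in_total[of p y] assms(3) p y principal_ideal_subset by blast
    moreover have "card (principal_ideal p) = card (principal_ideal y)"
      using p_max[OF y] card_mono[OF finite sub] by simp
    ultimately have "principal_ideal p = principal_ideal y"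
      by (intro card_subset_eq) simp_all
    then show False using \<open>\<not> dvd_in p y\<close> mem_principal_ideal_self[of y] mem_principal_ideal_iff by blast
  qed
  then show ?thesis using p by blast
qed

lemma max_ideal_iff: "x \<in> max_ideal R \<longleftrightarrow> x \<in> R \<and> x \<notin> S_units"
proof -
  have "\<exists>z\<in>R. x * z = 1" if x: "x \<in> R" and y: "x * y = 1" for y
  proof -
    have "inj_on (\<lambda>z. x * z) R"
    proof (rule inj_onI)
      fix z1 z2 assume "x * z1 = x * z2"
      then have "y * x * z1 = y * x * z2" by (simp add: mult.assoc)
      then show "z1 = z2" using y by (simp add: mult.commute)
    qed
    then have "card ((\<lambda>z. x * z) ` R) = card R" by (simp add: card_image)
    moreover have "(\<lambda>z. x * z) ` R \<subseteq> R" using x by auto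
    ultimately have "(\<lambda>z. x * z) ` R = R" by (simp add: card_subset_eq)
    then have "1 \<in> (\<lambda>z. x * z) ` R" by simp
    then obtain z where "z \<in> R" "1 = x * z" by blast
    then show ?thesis by auto
  qed
  then show ?thesis
    unfolding max_ideal_def S_units_iff by blast
qed

lemma zero_max_ideal [simp]: "0 \<in> max_ideal R"
  by (simp add: max_ideal_iff S_units_iff)

lemma max_ideal_mem: "x \<in> max_ideal R \<Longrightarrow> x \<in> R"
  by (simp add: max_ideal_iff)

lemma inverse_mem_if_not_max_ideal:
  "x \<in> R \<Longrightarrow> x \<notin> max_ideal R \<Longrightarrow> \<exists>y\<in>R. x * y = 1"
  unfolding max_ideal_def by auto

lemma max_ideal_mult: "x \<in> max_ideal R \<Longrightarrow> y \<in> R \<Longrightarrow> x * y \<in> max_ideal R"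
  by (auto simp: max_ideal_iff S_units_mult_iff)

lemma max_ideal_add:
  assumes "x \<in> max_ideal R" "y \<in> max_ideal R"
  shows "x + y \<in> max_ideal R"
proof -
  have *: "x + y \<in> max_ideal R" if x: "x \<in> max_ideal R" and "dvd_in x y" for x y
  proof -
    obtain z where "z \<in> R" "y = x * z" using \<open>dvd_in x y\<close> unfolding dvd_in_def by blast
    then have "x + y = x * (1 + z)" "1 + z \<in> R" by (auto simp: distrib_left)
    then show ?thesis using max_ideal_mult[OF x] by simp
  qed
  from dvd_in_total[of x y] show ?thesis
    using assms max_ideal_mem *[of x y] *[of y x] by (auto simp: add.commute)
qed

lemma one_plus_max_ideal_invertible: "z \<in> max_ideal R \<Longrightarrow> \<exists>w\<in>R. (1 + z) * w = 1"
proof -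
  assume z: "z \<in> max_ideal R"
  have "1 + z \<notin> max_ideal R"
  proof
    assume "1 + z \<in> max_ideal R"
    moreover have "- z \<in> max_ideal R"
      using max_ideal_mult[OF z uminus_mem[OF one_mem]] by simp
    ultimately have "(1 + z) + - z \<in> max_ideal R" by (rule max_ideal_add)
    then show False by (simp add: max_ideal_iff)
  qed
  then show ?thesis using z by (intro inverse_mem_if_not_max_ideal) (auto simp: max_ideal_iff)
qed

definition \<pi> :: 'a where
  "\<pi> = (SOME p. p \<in> max_ideal R \<and> (\<forall>y\<in>max_ideal R. dvd_in p y))"

lemma pi_max_ideal: "\<pi> \<in> max_ideal R" and dvd_in_pi: "y \<in> max_ideal R \<Longrightarrow> dvd_in \<pi> y"
proof -
  have "\<exists>p. p \<in> max_ideal R \<and> (\<forall>y\<in>max_ideal R. dvd_in p y)"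
  proof -
    have "max_ideal R \<noteq> {}" "max_ideal R \<subseteq> R" using max_ideal_mem zero_max_ideal by blast+
    from exists_dvd_in_all[OF finite this] show ?thesis by blast
  qed
  from someI_ex[OF this] show "\<pi> \<in> max_ideal R" "y \<in> max_ideal R \<Longrightarrow> dvd_in \<pi> y"
    unfolding \<pi>_def[symmetric] by auto
qed

lemma pi_mem: "\<pi> \<in> R"
  using pi_max_ideal max_ideal_mem by blast

lemma pi_power_max_ideal:
  assumes "0 < b"
  shows "\<pi> ^ b \<in> max_ideal R"
proof -
  obtain c where "b = Suc c" using assms gr0_conv_Suc by blast
  then show ?thesis using max_ideal_mult[OF pi_max_ideal power_mem[OF pi_mem, of c]] by simp
qed

lemma pi_nilpotent: "\<exists>K. \<pi> ^ K = 0"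
proof -
  have "\<not> inj (\<lambda>k::nat. \<pi> ^ k)"
    using finite_UNIV inj_on_finite[of "\<lambda>k::nat. \<pi> ^ k" UNIV UNIV] by auto
  then obtain i j where ij: "i \<noteq> j" "\<pi> ^ i = \<pi> ^ j"
    unfolding inj_def by blast
  have "\<exists>a b. 0 < b \<and> \<pi> ^ a = \<pi> ^ (a + b)"
  proof (cases "i < j")
    case True
    then obtain b where "0 < b" "i + b = j" using less_imp_add_positive by blast
    then show ?thesis using ij by blast
  next
    case False
    then obtain b where "0 < b" "j + b = i" using ij(1) less_imp_add_positive[of j i] by auto
    then show ?thesis using ij by metis
  qed
  then obtain a b where ab: "b > 0" "\<pi> ^ a = \<pi> ^ (a + b)" by blast
  have "- (\<pi> ^ b) \<in> max_ideal R"
    using max_ideal_mult[OF pi_power_max_ideal[OF ab(1)] uminus_mem[OF one_mem]] by simp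
  then obtain w where w: "(1 + - (\<pi> ^ b)) * w = 1"
    using one_plus_max_ideal_invertible by blast
  have "\<pi> ^ a * (1 + - (\<pi> ^ b)) = 0"
    using ab(2) by (simp add: algebra_simps power_add)
  then have "\<pi> ^ a * ((1 + - (\<pi> ^ b)) * w) = 0" by (simp add: mult.assoc[symmetric])
  then show ?thesis using w by auto
qed

lemma pi_power_order:
  obtains K where "\<pi> ^ K \<noteq> 0" "\<pi> ^ Suc K = 0"
proof -
  define N where "N = (LEAST N. \<pi> ^ N = 0)"
  have N: "\<pi> ^ N = 0" unfolding N_def using pi_nilpotent by (rule LeastI_ex)
  then have N0: "N \<noteq> 0" by (cases N) auto
  have "\<pi> ^ (N - 1) \<noteq> 0"
    using not_less_Least[of "N - 1" "\<lambda>N. \<pi> ^ N = 0"] N0 unfolding N_def[symmetric] by auto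
  moreover have "\<pi> ^ Suc (N - 1) = 0" using N0 N by simp
  ultimately show ?thesis by (rule that)
qed

definition socle :: "'a set" where
  "socle = {z \<in> R. \<forall>y\<in>max_ideal R. y * z = 0}"

lemma two_le_card_socle: "2 \<le> card socle"
proof -
  obtain K where K: "\<pi> ^ K \<noteq> 0" "\<pi> ^ Suc K = 0" by (rule pi_power_order)
  have "y * \<pi> ^ K = 0" if "y \<in> max_ideal R" for y
    using dvd_in_pi[OF that] K(2) unfolding dvd_in_def by (auto simp: ac_simps)
  then have "{0, \<pi> ^ K} \<subseteq> socle"
    unfolding socle_def using pi_mem by auto
  then show ?thesis using K(1) card_mono[of socle "{0, \<pi> ^ K}"] by auto
qed

lemma dvd_in_socle:
  assumes x: "x \<in> R" "x \<noteq> 0" and y: "y \<in> socle"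
  shows "dvd_in x y"
  using dvd_in_total[of x y]
proof
  assume "dvd_in y x"
  then obtain z where z: "z \<in> R" "x = y * z" unfolding dvd_in_def by blast
  show ?thesis
  proof (cases "z \<in> max_ideal R")
    case True
    then show ?thesis using z x y unfolding socle_def by (auto simp: mult.commute)
  next
    case False
    then obtain w where w: "w \<in> R" "z * w = 1" using inverse_mem_if_not_max_ideal z by auto
    then have "y = x * w" using z by (simp add: mult.assoc)
    then show ?thesis using w unfolding dvd_in_def by blast
  qed
qed (use x y in \<open>auto simp: socle_def\<close>)

end

section \<open>Matrices over a subring\<close>

definition mat_id :: "nat \<Rightarrow> nat \<Rightarrow> 'a::comm_ring_1" where
  "mat_id = (\<lambda>i j. if i = j then 1 else 0)"

lemma mat_mul_assoc: "mat_mul (mat_mul A B p) C q = mat_mul A (mat_mul B C q) p"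
  unfolding mat_mul_def
proof (intro ext)
  fix i k
  show "(\<Sum>j<q. (\<Sum>n<p. A i n * B n j) * C j k) = (\<Sum>j<p. A i j * (\<Sum>n<q. B j n * C n k))"
    by (simp add: sum_distrib_left sum_distrib_right mult.assoc) (subst sum.swap, simp)
qed

lemma mat_mul_id_left: "i < d \<Longrightarrow> mat_mul mat_id A d i k = A i k"
  unfolding mat_mul_def mat_id_def by (simp add: if_distrib[of "\<lambda>z. z * _"] sum.delta cong: if_cong)

lemma mat_mul_id_right: "k < d \<Longrightarrow> mat_mul A mat_id d i k = A i k"
  unfolding mat_mul_def mat_id_def by (simp add: if_distrib[of "\<lambda>z. _ * z"] sum.delta' cong: if_cong)

lemma mat_mul_cong:
  assumes "\<And>j. j < p \<Longrightarrow> A i j = A' i j" "\<And>j. j < p \<Longrightarrow> B j k = B' j k"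
  shows "mat_mul A B p i k = mat_mul A' B' p i k"
  unfolding mat_mul_def using assms by (intro sum.cong) auto

definition swap_index :: "nat \<Rightarrow> nat \<Rightarrow> nat \<Rightarrow> nat" where
  "swap_index a b i = (if i = a then b else if i = b then a else i)"

definition mat_swap :: "nat \<Rightarrow> nat \<Rightarrow> nat \<Rightarrow> nat \<Rightarrow> 'a::comm_ring_1" where
  "mat_swap a b = (\<lambda>i j. if j = swap_index a b i then 1 else 0)"

lemma swap_index_swap_index [simp]: "swap_index a b (swap_index a b i) = i"
  unfolding swap_index_def by auto

lemma swap_index_less: "a < d \<Longrightarrow> b < d \<Longrightarrow> i < d \<Longrightarrow> swap_index a b i < d"
  unfolding swap_index_def by auto
lemma swap_index_eq_iff: "(j = swap_index a b i) \<longleftrightarrow> (i = swap_index a b j)"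
  unfolding swap_index_def by auto

lemma mat_swap_mult_left:
  "a < d \<Longrightarrow> b < d \<Longrightarrow> i < d \<Longrightarrow> mat_mul (mat_swap a b) A d i k = A (swap_index a b i) k"
  unfolding mat_mul_def mat_swap_def using swap_index_less[of a d b i]
  by (simp add: if_distrib[of "\<lambda>z. z * _"] sum.delta' cong: if_cong)

lemma mat_swap_mult_right:
  "a < d \<Longrightarrow> b < d \<Longrightarrow> k < d \<Longrightarrow> mat_mul A (mat_swap a b) d i k = A i (swap_index a b k)"
  unfolding mat_mul_def mat_swap_def using swap_index_less[of a d b k]
  by (simp add: swap_index_eq_iff[of _ a b] if_distrib[of "\<lambda>z. _ * z"] sum.delta' cong: if_cong)

definition mat_col_elim :: "(nat \<Rightarrow> 'a::comm_ring_1) \<Rightarrow> nat \<Rightarrow> nat \<Rightarrow> 'a" where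
  "mat_col_elim c = (\<lambda>i j. if i = j then 1 else if j = 0 then - c i else 0)"
definition mat_row_elim :: "(nat \<Rightarrow> 'a::comm_ring_1) \<Rightarrow> nat \<Rightarrow> nat \<Rightarrow> 'a" where
  "mat_row_elim c = (\<lambda>i j. if i = j then 1 else if i = 0 then - c j else 0)"

lemma sum_lessThan_split_first: "d > 0 \<Longrightarrow> (\<Sum>j<d. f j) = f 0 + (\<Sum>j<d - 1. f (Suc j))"
proof (cases d)
  case (Suc n) then show ?thesis using sum.lessThan_Suc_shift[of f n] by simp
qed simp

lemma mat_col_elim_mult_left: "0 < d \<Longrightarrow> i < d \<Longrightarrow>
   mat_mul (mat_col_elim c) A d i k = (if i = 0 then A 0 k else A i k - c i * A 0 k)"
proof -
  assume d: "0 < d" and i: "i < d"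
  have "mat_mul (mat_col_elim c) A d i k = mat_col_elim c i 0 * A 0 k + (\<Sum>j<d - 1. mat_col_elim c i (Suc j) * A (Suc j) k)"
    unfolding mat_mul_def by (rule sum_lessThan_split_first[OF d])
  also have "(\<Sum>j<d - 1. mat_col_elim c i (Suc j) * A (Suc j) k) = (if i = 0 then 0 else A i k)"
  proof (cases i)
    case 0 then show ?thesis unfolding mat_col_elim_def by simp
  next
    case (Suc i')
    then have "(\<Sum>j<d - 1. mat_col_elim c i (Suc j) * A (Suc j) k) = (\<Sum>j<d - 1. if j = i' then A (Suc j) k else 0)"
      unfolding mat_col_elim_def by (intro sum.cong) auto
    also have "\<dots> = A i k" using Suc i by (simp add: sum.delta)
    finally show ?thesis using Suc by simp
  qed
  finally show ?thesis unfolding mat_col_elim_def by (auto simp: algebra_simps)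
qed

lemma mat_row_elim_mult_right: "0 < d \<Longrightarrow> k < d \<Longrightarrow>
   mat_mul A (mat_row_elim c) d i k = (if k = 0 then A i 0 else A i k - c k * A i 0)"
proof -
  assume d: "0 < d" and k: "k < d"
  have "mat_mul A (mat_row_elim c) d i k = A i 0 * mat_row_elim c 0 k + (\<Sum>j<d - 1. A i (Suc j) * mat_row_elim c (Suc j) k)"
    unfolding mat_mul_def by (rule sum_lessThan_split_first[OF d])
  also have "(\<Sum>j<d - 1. A i (Suc j) * mat_row_elim c (Suc j) k) = (if k = 0 then 0 else A i k)"
  proof (cases k)
    case 0 then show ?thesis unfolding mat_row_elim_def by simp
  next
    case (Suc k')
    then have "(\<Sum>j<d - 1. A i (Suc j) * mat_row_elim c (Suc j) k) = (\<Sum>j<d - 1. if j = k' then A i (Suc j) else 0)"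
      unfolding mat_row_elim_def by (intro sum.cong) auto
    also have "\<dots> = A i k" using Suc k by (simp add: sum.delta)
    finally show ?thesis using Suc by simp
  qed
  finally show ?thesis unfolding mat_row_elim_def by (auto simp: algebra_simps)
qed

definition mat_one_block :: "(nat \<Rightarrow> nat \<Rightarrow> 'a::comm_ring_1) \<Rightarrow> nat \<Rightarrow> nat \<Rightarrow> 'a" where
  "mat_one_block M = (\<lambda>i j. if i = 0 \<and> j = 0 then 1 else if i = 0 \<or> j = 0 then 0 else M (i - 1) (j - 1))"

lemma mat_one_block_mult: "mat_mul (mat_one_block A) (mat_one_block B) (Suc p) = mat_one_block (mat_mul A B p)"
proof (intro ext)
  fix i k
  show "mat_mul (mat_one_block A) (mat_one_block B) (Suc p) i k = mat_one_block (mat_mul A B p) i k"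
    unfolding mat_mul_def sum.lessThan_Suc_shift by (simp add: mat_one_block_def)
qed

lemma mat_one_block_block_mult:
  assumes B0: "\<And>k. 0 < k \<Longrightarrow> k < Suc d2 \<Longrightarrow> B 0 k = 0" and B1: "\<And>i. 0 < i \<Longrightarrow> i < Suc d1 \<Longrightarrow> B i 0 = 0"
    and i: "i < Suc d1" and k: "k < Suc d2"
  shows "mat_mul (mat_mul (mat_one_block P) B (Suc d1)) (mat_one_block Q) (Suc d2) i k =
     (if i = 0 \<and> k = 0 then B 0 0 else if i = 0 \<or> k = 0 then 0 else
        mat_mul (mat_mul P (\<lambda>i j. B (Suc i) (Suc j)) d1) Q d2 (i - 1) (k - 1))"
proof -
  have L: "mat_mul (mat_one_block P) B (Suc d1) i' k' =
     (if i' = 0 then B 0 k' else mat_mul P (\<lambda>i j. B (Suc i) k') d1 (i' - 1) 0)" for i' k'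
    unfolding mat_mul_def sum.lessThan_Suc_shift by (simp add: mat_one_block_def)
  have M: "mat_mul (mat_mul (mat_one_block P) B (Suc d1)) (mat_one_block Q) (Suc d2) i k =
     mat_mul (mat_one_block P) B (Suc d1) i 0 * mat_one_block Q 0 k +
     (\<Sum>j<d2. mat_mul (mat_one_block P) B (Suc d1) i (Suc j) * mat_one_block Q (Suc j) k)"
    unfolding mat_mul_def[of _ "mat_one_block Q"] sum.lessThan_Suc_shift ..
  show ?thesis
  proof (cases "i = 0")
    case True
    then show ?thesis unfolding M L using B0 by (auto simp: mat_one_block_def)
  next
    case False
    have z: "mat_mul P (\<lambda>i j. B (Suc i) 0) d1 (i - 1) 0 = 0"
      unfolding mat_mul_def using B1 by (auto intro!: sum.neutral)
    show ?thesis unfolding M L using False z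
      by (auto simp: mat_one_block_def mat_mul_def)
  qed
qed

context finite_chain_ring
begin

lemma mat_over_mul:
  "mat_over R d1 p A \<Longrightarrow> mat_over R p d2 B \<Longrightarrow> mat_over R d1 d2 (mat_mul A B p)"
  unfolding mat_over_def mat_mul_def by (auto intro!: sum_mem)

lemma mat_over_mat_id: "mat_over R d d mat_id"
  unfolding mat_over_def mat_id_def by auto

lemma invertible_mat_id: "invertible_over R d mat_id"
  unfolding invertible_over_def using mat_over_mat_id
  by (intro conjI exI[of _ mat_id]) (auto simp: mat_mul_id_left, auto simp: mat_id_def)

lemma invertible_mul:
  assumes P: "invertible_over R d P" and Q: "invertible_over R d Q"
  shows "invertible_over R d (mat_mul P Q d)"
proof -
  obtain P' where P': "mat_over R d d P'" "\<forall>i<d. \<forall>j<d. mat_mul P P' d i j = (if i = j then 1 else 0)"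
    "\<forall>i<d. \<forall>j<d. mat_mul P' P d i j = (if i = j then 1 else 0)" and PR: "mat_over R d d P"
    using P unfolding invertible_over_def by blast
  obtain Q' where Q': "mat_over R d d Q'" "\<forall>i<d. \<forall>j<d. mat_mul Q Q' d i j = (if i = j then 1 else 0)"
    "\<forall>i<d. \<forall>j<d. mat_mul Q' Q d i j = (if i = j then 1 else 0)" and QR: "mat_over R d d Q"
    using Q unfolding invertible_over_def by blast
  have e1: "mat_mul (mat_mul P Q d) (mat_mul Q' P' d) d i k = (if i = k then 1 else 0)" if "i < d" "k < d" for i k
  proof -
    have "mat_mul (mat_mul P Q d) (mat_mul Q' P' d) d i k = mat_mul P (mat_mul (mat_mul Q Q' d) P' d) d i k"
      by (simp add: mat_mul_assoc)
    also have "\<dots> = mat_mul P (mat_mul mat_id P' d) d i k"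
      by (intro mat_mul_cong mat_mul_cong) (auto simp: Q'(2) mat_id_def)
    also have "\<dots> = mat_mul P P' d i k"
      by (intro mat_mul_cong) (auto simp: mat_mul_id_left)
    finally show ?thesis using P'(2) that by simp
  qed
  have e2: "mat_mul (mat_mul Q' P' d) (mat_mul P Q d) d i k = (if i = k then 1 else 0)" if "i < d" "k < d" for i k
  proof -
    have "mat_mul (mat_mul Q' P' d) (mat_mul P Q d) d i k = mat_mul Q' (mat_mul (mat_mul P' P d) Q d) d i k"
      by (simp add: mat_mul_assoc)
    also have "\<dots> = mat_mul Q' (mat_mul mat_id Q d) d i k"
      by (intro mat_mul_cong mat_mul_cong) (auto simp: P'(3) mat_id_def)
    also have "\<dots> = mat_mul Q' Q d i k"
      by (intro mat_mul_cong) (auto simp: mat_mul_id_left)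
    finally show ?thesis using Q'(3) that by simp
  qed
  show ?thesis unfolding invertible_over_def
    using e1 e2 mat_over_mul[OF PR QR] mat_over_mul[OF Q'(1) P'(1)] by blast
qed

lemma dvd_in_mat_mul_left:
  "mat_over R d1 p P \<Longrightarrow> i < d1 \<Longrightarrow> (\<forall>j<p. dvd_in x (B j k)) \<Longrightarrow> dvd_in x (mat_mul P B p i k)"
  unfolding mat_mul_def mat_over_def by (auto intro!: dvd_in_sum dvd_in_mult_left)

lemma dvd_in_mat_mul_right:
  "mat_over R p d2 Q \<Longrightarrow> k < d2 \<Longrightarrow> (\<forall>j<p. dvd_in x (B i j)) \<Longrightarrow> dvd_in x (mat_mul B Q p i k)"
  unfolding mat_mul_def mat_over_def by (auto intro!: dvd_in_sum dvd_in_mult_right)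

lemma invertible_mat_swap:
  assumes "a < d" "b < d"
  shows "invertible_over R d (mat_swap a b)"
proof -
  have "\<forall>i<d. \<forall>j<d. mat_mul (mat_swap a b) (mat_swap a b) d i j = (if i = j then 1 else 0)"
    using assms by (simp add: mat_swap_mult_left) (simp add: mat_swap_def)
  moreover have "mat_over R d d (mat_swap a b)" by (auto simp: mat_over_def mat_swap_def)
  ultimately show ?thesis unfolding invertible_over_def by blast
qed

lemma mat_over_mat_col_elim: "(\<forall>i. c i \<in> R) \<Longrightarrow> mat_over R d d (mat_col_elim c)"
  unfolding mat_over_def mat_col_elim_def by auto
lemma mat_over_mat_row_elim: "(\<forall>i. c i \<in> R) \<Longrightarrow> mat_over R d d (mat_row_elim c)"
  unfolding mat_over_def mat_row_elim_def by auto

lemma invertible_mat_col_elim: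
  "(\<forall>i. c i \<in> R) \<Longrightarrow> 0 < d \<Longrightarrow> invertible_over R d (mat_col_elim c)"
  unfolding invertible_over_def
proof (intro conjI exI[of _ "mat_col_elim (\<lambda>i. - c i)"])
  assume c: "\<forall>i. c i \<in> R" and d: "0 < d"
  show "mat_over R d d (mat_col_elim c)" "mat_over R d d (mat_col_elim (\<lambda>i. - c i))"
    using c by (auto intro!: mat_over_mat_col_elim)
  show "\<forall>i<d. \<forall>j<d. mat_mul (mat_col_elim c) (mat_col_elim (\<lambda>i. - c i)) d i j = (if i = j then 1 else 0)"
    using d by (auto simp: mat_col_elim_mult_left) (auto simp: mat_col_elim_def)
  show "\<forall>i<d. \<forall>j<d. mat_mul (mat_col_elim (\<lambda>i. - c i)) (mat_col_elim c) d i j = (if i = j then 1 else 0)"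
    using d by (auto simp: mat_col_elim_mult_left) (auto simp: mat_col_elim_def)
qed

lemma invertible_mat_row_elim:
  "(\<forall>i. c i \<in> R) \<Longrightarrow> 0 < d \<Longrightarrow> invertible_over R d (mat_row_elim c)"
  unfolding invertible_over_def
proof (intro conjI exI[of _ "mat_row_elim (\<lambda>i. - c i)"])
  assume c: "\<forall>i. c i \<in> R" and d: "0 < d"
  show "mat_over R d d (mat_row_elim c)" "mat_over R d d (mat_row_elim (\<lambda>i. - c i))"
    using c by (auto intro!: mat_over_mat_row_elim)
  show "\<forall>i<d. \<forall>j<d. mat_mul (mat_row_elim c) (mat_row_elim (\<lambda>i. - c i)) d i j = (if i = j then 1 else 0)"
    using d by (auto simp: mat_row_elim_mult_right) (auto simp: mat_row_elim_def)
  show "\<forall>i<d. \<forall>j<d. mat_mul (mat_row_elim (\<lambda>i. - c i)) (mat_row_elim c) d i j = (if i = j then 1 else 0)"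
    using d by (auto simp: mat_row_elim_mult_right) (auto simp: mat_row_elim_def)
qed

lemma invertible_mat_one_block:
  assumes P: "invertible_over R d P"
  shows "invertible_over R (Suc d) (mat_one_block P)"
proof -
  obtain P' where P': "mat_over R d d P'" "\<forall>i<d. \<forall>j<d. mat_mul P P' d i j = (if i = j then 1 else 0)"
    "\<forall>i<d. \<forall>j<d. mat_mul P' P d i j = (if i = j then 1 else 0)" and PR: "mat_over R d d P"
    using P unfolding invertible_over_def by blast
  show ?thesis unfolding invertible_over_def
  proof (intro conjI exI[of _ "mat_one_block P'"])
    show "mat_over R (Suc d) (Suc d) (mat_one_block P)" "mat_over R (Suc d) (Suc d) (mat_one_block P')"
      using PR P'(1) unfolding mat_over_def mat_one_block_def by auto
    show "\<forall>i<Suc d. \<forall>j<Suc d. mat_mul (mat_one_block P) (mat_one_block P') (Suc d) i j = (if i = j then 1 else 0)"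
      unfolding mat_one_block_mult using P'(2) by (auto simp: mat_one_block_def)
    show "\<forall>i<Suc d. \<forall>j<Suc d. mat_mul (mat_one_block P') (mat_one_block P) (Suc d) i j = (if i = j then 1 else 0)"
      unfolding mat_one_block_mult using P'(3) by (auto simp: mat_one_block_def)
  qed
qed

lemma smith_pivot_to_corner:
  assumes A: "mat_over R (Suc d1) (Suc d2) A"
  obtains P Q where "invertible_over R (Suc d1) P" "invertible_over R (Suc d2) Q"
    "\<forall>i<Suc d1. \<forall>k<Suc d2. dvd_in (mat_mul (mat_mul P A (Suc d1)) Q (Suc d2) 0 0)
       (mat_mul (mat_mul P A (Suc d1)) Q (Suc d2) i k)"
proof -
  define E where "E = (\<lambda>(i, j). A i j) ` ({..<Suc d1} \<times> {..<Suc d2})"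
  have "E \<noteq> {}" "E \<subseteq> R" using A unfolding E_def mat_over_def by auto
  then obtain x where "x \<in> E" and x_dvd: "\<forall>y\<in>E. dvd_in x y"
    using exists_dvd_in_all[OF finite] by blast
  then obtain i0 j0 where ij0: "i0 < Suc d1" "j0 < Suc d2" "x = A i0 j0" unfolding E_def by auto
  define A1 where "A1 = mat_mul (mat_mul (mat_swap 0 i0) A (Suc d1)) (mat_swap 0 j0) (Suc d2)"
  have A1: "A1 i k = A (swap_index 0 i0 i) (swap_index 0 j0 k)" if "i < Suc d1" "k < Suc d2" for i k
    unfolding A1_def using that ij0 by (simp add: mat_swap_mult_right mat_swap_mult_left swap_index_less)
  have "A1 0 0 = x" using A1[of 0 0] ij0 by (simp add: swap_index_def)
  moreover have "dvd_in x (A1 i k)" if "i < Suc d1" "k < Suc d2" for i k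
    using A1[OF that] x_dvd that ij0 swap_index_less[of 0 "Suc d1" i0 i] swap_index_less[of 0 "Suc d2" j0 k]
    unfolding E_def by auto
  moreover have "invertible_over R (Suc d1) (mat_swap 0 i0)" "invertible_over R (Suc d2) (mat_swap 0 j0)"
    using ij0 by (auto intro: invertible_mat_swap)
  ultimately show ?thesis using that unfolding A1_def by auto
qed

lemma smith_clear_first_row_col:
  assumes A: "mat_over R (Suc d1) (Suc d2) A"
    and pivot: "\<forall>i<Suc d1. \<forall>k<Suc d2. dvd_in (A 0 0) (A i k)"
  obtains P Q where "invertible_over R (Suc d1) P" "invertible_over R (Suc d2) Q"
    "mat_mul (mat_mul P A (Suc d1)) Q (Suc d2) 0 0 = A 0 0"
    "\<And>k. 0 < k \<Longrightarrow> k < Suc d2 \<Longrightarrow> mat_mul (mat_mul P A (Suc d1)) Q (Suc d2) 0 k = 0"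
    "\<And>i. 0 < i \<Longrightarrow> i < Suc d1 \<Longrightarrow> mat_mul (mat_mul P A (Suc d1)) Q (Suc d2) i 0 = 0"
    "\<And>i k. i < Suc d1 \<Longrightarrow> k < Suc d2 \<Longrightarrow> dvd_in (A 0 0) (mat_mul (mat_mul P A (Suc d1)) Q (Suc d2) i k)"
proof -
  let ?x = "A 0 0"
  have "\<forall>i. \<exists>z. z \<in> R \<and> (i < Suc d1 \<longrightarrow> A i 0 = ?x * z)"
    using pivot unfolding dvd_in_def by (metis zero_less_Suc zero_mem)
  then obtain c where c: "\<And>i. c i \<in> R" "\<And>i. i < Suc d1 \<Longrightarrow> A i 0 = ?x * c i"
    by (auto dest!: choice)
  have "\<forall>k. \<exists>z. z \<in> R \<and> (k < Suc d2 \<longrightarrow> A 0 k = ?x * z)"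
    using pivot unfolding dvd_in_def by (metis zero_less_Suc zero_mem)
  then obtain c' where c': "\<And>k. c' k \<in> R" "\<And>k. k < Suc d2 \<Longrightarrow> A 0 k = ?x * c' k"
    by (auto dest!: choice)
  define X where "X = mat_mul (mat_col_elim c) A (Suc d1)"
  have X: "X i k = (if i = 0 then A 0 k else A i k - c i * A 0 k)" if "i < Suc d1" for i k
    unfolding X_def using that by (simp add: mat_col_elim_mult_left)
  define A' where "A' = mat_mul X (mat_row_elim c') (Suc d2)"
  have A': "A' i k = (if k = 0 then X i 0 else X i k - c' k * X i 0)" if "k < Suc d2" for i k
    unfolding A'_def using that by (simp add: mat_row_elim_mult_right)
  have "A' 0 0 = ?x" using A'[of 0 0] X[of 0 0] by simp
  moreover have "A' 0 k = 0" if "0 < k" "k < Suc d2" for k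
    using A'[of k 0] X[of 0 k] X[of 0 0] c'(2)[of k] that by (simp add: mult.commute)
  moreover have "A' i 0 = 0" if "0 < i" "i < Suc d1" for i
    using A'[of 0 i] X[of i 0] c(2)[of i] that by (simp add: mult.commute)
  moreover have "dvd_in ?x (A' i k)" if "i < Suc d1" "k < Suc d2" for i k
  proof -
    have "dvd_in ?x (X i k)" if "i < Suc d1" "k < Suc d2" for i k
      using X[of i k] that pivot c(1) by (auto intro!: dvd_in_diff dvd_in_mult_left)
    then show ?thesis using A'[of k i] that c'(1) by (auto intro!: dvd_in_diff dvd_in_mult_left)
  qed
  moreover have "A' = mat_mul (mat_mul (mat_col_elim c) A (Suc d1)) (mat_row_elim c') (Suc d2)"
    unfolding A'_def X_def ..
  moreover have "invertible_over R (Suc d1) (mat_col_elim c)" "invertible_over R (Suc d2) (mat_row_elim c')"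
    using c(1) c'(1) by (auto intro: invertible_mat_col_elim invertible_mat_row_elim)
  ultimately show ?thesis using that by auto
qed

lemma smith_pivot:
  assumes A: "mat_over R (Suc d1) (Suc d2) A"
  obtains P Q x B where "invertible_over R (Suc d1) P" "invertible_over R (Suc d2) Q"
    "mat_over R d1 d2 B" "\<forall>i<d1. \<forall>k<d2. dvd_in x (B i k)"
    "\<forall>i<Suc d1. \<forall>k<Suc d2. mat_mul (mat_mul P A (Suc d1)) Q (Suc d2) i k =
       (if i = 0 \<and> k = 0 then x else if i = 0 \<or> k = 0 then 0 else B (i - 1) (k - 1))"
proof -
  obtain P1 Q1 where P1: "invertible_over R (Suc d1) P1" and Q1: "invertible_over R (Suc d2) Q1"
    and pivot: "\<forall>i<Suc d1. \<forall>k<Suc d2. dvd_in (mat_mul (mat_mul P1 A (Suc d1)) Q1 (Suc d2) 0 0)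
       (mat_mul (mat_mul P1 A (Suc d1)) Q1 (Suc d2) i k)"
    using smith_pivot_to_corner[OF A] by blast
  define A1 where "A1 = mat_mul (mat_mul P1 A (Suc d1)) Q1 (Suc d2)"
  have A1: "mat_over R (Suc d1) (Suc d2) A1"
    unfolding A1_def using A P1 Q1 unfolding invertible_over_def by (blast intro: mat_over_mul)
  obtain P2 Q2 where P2: "invertible_over R (Suc d1) P2" and Q2: "invertible_over R (Suc d2) Q2"
    and A2: "mat_mul (mat_mul P2 A1 (Suc d1)) Q2 (Suc d2) 0 0 = A1 0 0"
      "\<And>k. 0 < k \<Longrightarrow> k < Suc d2 \<Longrightarrow> mat_mul (mat_mul P2 A1 (Suc d1)) Q2 (Suc d2) 0 k = 0"
      "\<And>i. 0 < i \<Longrightarrow> i < Suc d1 \<Longrightarrow> mat_mul (mat_mul P2 A1 (Suc d1)) Q2 (Suc d2) i 0 = 0"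
      "\<And>i k. i < Suc d1 \<Longrightarrow> k < Suc d2 \<Longrightarrow> dvd_in (A1 0 0) (mat_mul (mat_mul P2 A1 (Suc d1)) Q2 (Suc d2) i k)"
    using smith_clear_first_row_col[OF A1] pivot unfolding A1_def by blast
  define A2 where "A2 = mat_mul (mat_mul P2 A1 (Suc d1)) Q2 (Suc d2)"
  have "mat_over R (Suc d1) (Suc d2) A2"
    unfolding A2_def using A1 P2 Q2 unfolding invertible_over_def by (blast intro: mat_over_mul)
  then have "mat_over R d1 d2 (\<lambda>i j. A2 (Suc i) (Suc j))" by (simp add: mat_over_def)
  moreover have "invertible_over R (Suc d1) (mat_mul P2 P1 (Suc d1))" "invertible_over R (Suc d2) (mat_mul Q1 Q2 (Suc d2))"
    using P1 P2 Q1 Q2 by (auto intro: invertible_mul)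
  moreover have "mat_mul (mat_mul (mat_mul P2 P1 (Suc d1)) A (Suc d1)) (mat_mul Q1 Q2 (Suc d2)) (Suc d2) = A2"
    unfolding A2_def A1_def by (simp only: mat_mul_assoc)
  ultimately show ?thesis
    using that[of "mat_mul P2 P1 (Suc d1)" "mat_mul Q1 Q2 (Suc d2)" "\<lambda>i j. A2 (Suc i) (Suc j)" "A1 0 0"] A2
    unfolding A2_def[symmetric] by (auto simp: less_Suc_eq_0_disj)
qed

lemma smith_form_corner:
  assumes sm: "smith_form R d1 d2 D" and dvd: "\<forall>i<d1. \<forall>k<d2. dvd_in x (D i k)"
    and M: "\<forall>i<Suc d1. \<forall>k<Suc d2. M i k = (if i = 0 \<and> k = 0 then x else if i = 0 \<or> k = 0 then 0 else D (i - 1) (k - 1))"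
  shows "smith_form R (Suc d1) (Suc d2) M"
  unfolding smith_form_def
proof (intro conjI allI impI)
  fix i j assume ij: "i < Suc d1" "j < Suc d2" "i \<noteq> j"
  show "M i j = 0"
    using M ij sm unfolding smith_form_def by auto
next
  fix i assume i: "Suc i < min (Suc d1) (Suc d2)"
  show "\<exists>c\<in>R. M (Suc i) (Suc i) = M i i * c"
  proof (cases i)
    case 0
    then show ?thesis using M dvd i unfolding dvd_in_def by auto
  next
    case (Suc i')
    then show ?thesis using M sm i unfolding smith_form_def by auto
  qed
qed

lemma smith_form_exists:
  "mat_over R d1 d2 A \<Longrightarrow> \<exists>P Q. invertible_over R d1 P \<and> invertible_over R d2 Q \<and>
     smith_form R d1 d2 (mat_mul (mat_mul P A d1) Q d2)"
proof (induction d1 arbitrary: d2 A)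
  case 0
  then show ?case using invertible_mat_id by (auto simp: smith_form_def)
next
  case (Suc d1)
  show ?case
  proof (cases d2)
    case 0
    then show ?thesis using invertible_mat_id by (auto simp: smith_form_def)
  next
    case (Suc d2')
    have A: "mat_over R (Suc d1) (Suc d2') A" using Suc.prems Suc by simp
    obtain P1 Q1 x B where P1: "invertible_over R (Suc d1) P1" and Q1: "invertible_over R (Suc d2') Q1"
      and B: "mat_over R d1 d2' B" "\<forall>i<d1. \<forall>k<d2'. dvd_in x (B i k)"
      and A1: "\<forall>i<Suc d1. \<forall>k<Suc d2'. mat_mul (mat_mul P1 A (Suc d1)) Q1 (Suc d2') i k =
         (if i = 0 \<and> k = 0 then x else if i = 0 \<or> k = 0 then 0 else B (i - 1) (k - 1))"
      by (rule smith_pivot[OF A])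
    obtain P' Q' where P': "invertible_over R d1 P'" and Q': "invertible_over R d2' Q'"
      and sm: "smith_form R d1 d2' (mat_mul (mat_mul P' B d1) Q' d2')"
      using Suc.IH[OF B(1)] by blast
    define P where "P = mat_mul (mat_one_block P') P1 (Suc d1)"
    define Q where "Q = mat_mul Q1 (mat_one_block Q') (Suc d2')"
    have "invertible_over R (Suc d1) P" "invertible_over R (Suc d2') Q"
      unfolding P_def Q_def using P1 P' Q1 Q'
      by (auto intro!: invertible_mul invertible_mat_one_block)
    moreover have "mat_mul (mat_mul P A (Suc d1)) Q (Suc d2') =
        mat_mul (mat_mul (mat_one_block P') (mat_mul (mat_mul P1 A (Suc d1)) Q1 (Suc d2')) (Suc d1))
          (mat_one_block Q') (Suc d2')"
      unfolding P_def Q_def by (simp only: mat_mul_assoc)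
    then have "\<forall>i<Suc d1. \<forall>k<Suc d2'. mat_mul (mat_mul P A (Suc d1)) Q (Suc d2') i k =
        (if i = 0 \<and> k = 0 then x else if i = 0 \<or> k = 0 then 0 else
          mat_mul (mat_mul P' B d1) Q' d2' (i - 1) (k - 1))"
      using A1 mat_one_block_block_mult[of d2' "mat_mul (mat_mul P1 A (Suc d1)) Q1 (Suc d2')" d1 _ _ P' Q']
      by (auto intro!: mat_mul_cong)
    moreover have "\<forall>i<d1. \<forall>k<d2'. dvd_in x (mat_mul (mat_mul P' B d1) Q' d2' i k)"
      using P' Q' B(2) unfolding invertible_over_def
      by (blast intro: dvd_in_mat_mul_right dvd_in_mat_mul_left)
    ultimately show ?thesis
      using smith_form_corner[OF sm] Suc by blast
  qed
qed

end

section \<open>Rank of a coordinate matrix\<close>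

context finite_chain_ring
begin

lemma coord_spec:
  assumes B: "R_basis R m B"
  shows "(\<forall>i<m. coord R m B x i \<in> R) \<and> (\<forall>i\<ge>m. coord R m B x i = 0) \<and> x = (\<Sum>i<m. coord R m B x i * B i)"
proof -
  have "\<exists>!c. (\<forall>i<m. c i \<in> R) \<and> (\<forall>i\<ge>m. c i = 0) \<and> x = (\<Sum>i<m. c i * B i)"
    using B unfolding R_basis_def by blast
  then show ?thesis unfolding coord_def by (rule theI')
qed

lemma coord_unique:
  assumes B: "R_basis R m B" and c: "\<forall>i<m. c i \<in> R" "\<forall>i\<ge>m. c i = 0" "x = (\<Sum>i<m. c i * B i)"
  shows "coord R m B x = c"
proof -
  have ex1: "\<exists>!c. (\<forall>i<m. c i \<in> R) \<and> (\<forall>i\<ge>m. c i = 0) \<and> x = (\<Sum>i<m. c i * B i)"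
    using B unfolding R_basis_def by blast
  show ?thesis using ex1 coord_spec[OF B, of x] c by blast
qed

lemma coord_lin:
  assumes B: "R_basis R m B" and rho: "\<forall>j<s. \<rho> j \<in> R"
  shows "coord R m B (\<Sum>j<s. \<rho> j * u j) = (\<lambda>i. \<Sum>j<s. \<rho> j * coord R m B (u j) i)"
proof (rule coord_unique[OF B])
  show "\<forall>i<m. (\<Sum>j<s. \<rho> j * coord R m B (u j) i) \<in> R"
    using coord_spec[OF B] rho by (auto intro!: sum_mem)
  show "\<forall>i\<ge>m. (\<Sum>j<s. \<rho> j * coord R m B (u j) i) = 0"
    using coord_spec[OF B] by auto
  have "(\<Sum>j<s. \<rho> j * u j) = (\<Sum>j<s. \<rho> j * (\<Sum>i<m. coord R m B (u j) i * B i))"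
    using coord_spec[OF B] by (intro sum.cong) auto
  also have "\<dots> = (\<Sum>i<m. (\<Sum>j<s. \<rho> j * coord R m B (u j) i) * B i)"
    by (simp add: sum_distrib_left sum_distrib_right mult.assoc) (rule sum.swap)
  finally show "(\<Sum>j<s. \<rho> j * u j) = (\<Sum>i<m. (\<Sum>j<s. \<rho> j * coord R m B (u j) i) * B i)" .
qed

lemma coord_mul:
  assumes B: "R_basis R m B" and y: "y \<in> R"
  shows "coord R m B (y * v) = (\<lambda>i. y * coord R m B v i)"
proof (rule coord_unique[OF B])
  show "\<forall>i<m. y * coord R m B v i \<in> R" using coord_spec[OF B] y by auto
  show "\<forall>i\<ge>m. y * coord R m B v i = 0" using coord_spec[OF B] by auto
  have "y * v = y * (\<Sum>i<m. coord R m B v i * B i)" using coord_spec[OF B] by metis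
  then show "y * v = (\<Sum>i<m. y * coord R m B v i * B i)" by (simp add: sum_distrib_left mult.assoc)
qed

lemma coord_eq:
  assumes B: "R_basis R m B" and eq: "\<forall>i<m. coord R m B v i = coord R m B v' i"
  shows "v = v'"
proof -
  have "v = (\<Sum>i<m. coord R m B v i * B i)" using coord_spec[OF B] by metis
  also have "\<dots> = (\<Sum>i<m. coord R m B v' i * B i)" using eq by simp
  also have "\<dots> = v'" using coord_spec[OF B] by metis
  finally show ?thesis .
qed

definition span_socle :: "(nat \<Rightarrow> 'a) \<Rightarrow> nat \<Rightarrow> 'a set" where
  "span_socle u s = {v. (\<exists>\<rho>. (\<forall>j<s. \<rho> j \<in> R) \<and> v = (\<Sum>j<s. \<rho> j * u j)) \<and> (\<forall>y\<in>max_ideal R. y * v = 0)}"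

end

(* In the coordinates snf_coord v = P * coord v the R-span of u becomes the direct sum of the
   D i i R. *)

locale snf_of_span = finite_chain_ring +
  fixes m s :: nat and B u :: "nat \<Rightarrow> 'a" and P Q P' Q' :: "nat \<Rightarrow> nat \<Rightarrow> 'a"
  assumes basis: "R_basis R m B"
    and P: "mat_over R m m P" and P'P: "\<forall>i<m. \<forall>j<m. mat_mul P' P m i j = (if i = j then 1 else 0)"
    and Q: "mat_over R s s Q" "mat_over R s s Q'"
    and QQ': "\<forall>i<s. \<forall>j<s. mat_mul Q Q' s i j = (if i = j then 1 else 0)"
    and Q'Q: "\<forall>i<s. \<forall>j<s. mat_mul Q' Q s i j = (if i = j then 1 else 0)"
    and smith: "smith_form R m s (mat_mul (mat_mul P (\<lambda>i j. coord R m B (u j) i) m) Q s)"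
begin

definition D :: "nat \<Rightarrow> nat \<Rightarrow> 'a" where
  "D = mat_mul (mat_mul P (\<lambda>i j. coord R m B (u j) i) m) Q s"

definition diag_support :: "nat set" where
  "diag_support = {i. i < min m s \<and> D i i \<noteq> 0}"

definition snf_coord :: "'a \<Rightarrow> nat \<Rightarrow> 'a" where
  "snf_coord v i = (\<Sum>k<m. P i k * coord R m B v k)"

lemma D_off_diag: "i < m \<Longrightarrow> l < s \<Longrightarrow> i \<noteq> l \<Longrightarrow> D i l = 0"
  using smith unfolding smith_form_def D_def by auto

lemma mat_over_D: "mat_over R m s D"
  unfolding D_def using coord_spec[OF basis] P Q
  by (intro mat_over_mul) (auto simp: mat_over_def)

lemma snf_coord_span:
  assumes \<rho>: "\<forall>j<s. \<rho> j \<in> R" and i: "i < m"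
  shows "snf_coord (\<Sum>j<s. \<rho> j * u j) i = (if i < s then D i i * (\<Sum>j<s. Q' i j * \<rho> j) else 0)"
proof -
  let ?A = "\<lambda>i j. coord R m B (u j) i"
  have PA: "mat_mul P ?A m i j = (\<Sum>l<s. D i l * Q' l j)" if "j < s" for j
  proof -
    have "(\<Sum>l<s. D i l * Q' l j) = mat_mul D Q' s i j" unfolding mat_mul_def ..
    also have "\<dots> = mat_mul (mat_mul P ?A m) (mat_mul Q Q' s) s i j"
      unfolding D_def by (simp add: mat_mul_assoc)
    also have "\<dots> = mat_mul (mat_mul P ?A m) mat_id s i j"
      by (rule mat_mul_cong) (auto simp: QQ' mat_id_def that)
    finally show ?thesis using that by (simp add: mat_mul_id_right)
  qed
  have "snf_coord (\<Sum>j<s. \<rho> j * u j) i = (\<Sum>j<s. \<rho> j * mat_mul P ?A m i j)"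
    unfolding snf_coord_def coord_lin[OF basis \<rho>] mat_mul_def
    by (simp add: sum_distrib_left mult.left_commute) (rule sum.swap)
  also have "\<dots> = (\<Sum>j<s. \<rho> j * (\<Sum>l<s. D i l * Q' l j))"
    using PA by simp
  also have "\<dots> = (\<Sum>l<s. D i l * (\<Sum>j<s. Q' l j * \<rho> j))"
    by (simp only: sum_distrib_left) (subst sum.swap, simp add: ac_simps)
  also have "\<dots> = (\<Sum>l<s. if l = i then D i i * (\<Sum>j<s. Q' i j * \<rho> j) else 0)"
    using D_off_diag i by (intro sum.cong) auto
  finally show ?thesis by (simp add: sum.delta')
qed

lemma snf_coord_inj:
  assumes "\<forall>i<m. snf_coord v i = snf_coord v' i"
  shows "v = v'"
proof (rule coord_eq[OF basis], intro allI impI)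
  fix k assume k: "k < m"
  have "(\<Sum>i<m. P' k i * snf_coord x i) = coord R m B x k" for x
  proof -
    have "(\<Sum>i<m. P' k i * snf_coord x i) = (\<Sum>l<m. mat_mul P' P m k l * coord R m B x l)"
      unfolding snf_coord_def mat_mul_def
      by (simp add: sum_distrib_left sum_distrib_right mult.assoc) (rule sum.swap)
    also have "\<dots> = (\<Sum>l<m. if l = k then coord R m B x l else 0)"
      using P'P k by (intro sum.cong) auto
    finally show ?thesis using k by (simp add: sum.delta')
  qed
  from this[of v] this[of v'] show "coord R m B v k = coord R m B v' k"
    using assms by simp
qed

lemma snf_coord_mult: "y \<in> R \<Longrightarrow> snf_coord (y * v) i = y * snf_coord v i"
  unfolding snf_coord_def coord_mul[OF basis] by (simp add: sum_distrib_left mult.left_commute)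

lemma snf_coord_zero: "snf_coord 0 i = 0"
  using snf_coord_mult[of 0 0 i] by simp

lemma snf_coord_span_socle:
  assumes v: "v \<in> span_socle u s" and i: "i \<in> diag_support"
  shows "snf_coord v i \<in> socle"
proof -
  obtain \<rho> where \<rho>: "\<forall>j<s. \<rho> j \<in> R" "v = (\<Sum>j<s. \<rho> j * u j)"
    and ann: "\<forall>y\<in>max_ideal R. y * v = 0"
    using v unfolding span_socle_def by auto
  have "snf_coord v i \<in> R"
    using snf_coord_span[OF \<rho>(1)] \<rho>(2) i mat_over_D Q(2) \<rho>(1)
    unfolding mat_over_def diag_support_def by (auto intro!: mult_mem sum_mem)
  moreover have "y * snf_coord v i = 0" if "y \<in> max_ideal R" for y
    using snf_coord_mult[of y v i] ann that snf_coord_zero max_ideal_mem by auto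
  ultimately show ?thesis unfolding socle_def by auto
qed

lemma snf_coord_diagonal_combination:
  assumes \<tau>: "\<And>i. \<tau> i \<in> R"
  obtains \<rho> where "\<forall>j<s. \<rho> j \<in> R"
    "\<And>i. i < m \<Longrightarrow> snf_coord (\<Sum>j<s. \<rho> j * u j) i = (if i < s then D i i * \<tau> i else 0)"
proof
  define \<rho> where "\<rho> j = (\<Sum>l<s. Q j l * \<tau> l)" for j
  show \<rho>: "\<forall>j<s. \<rho> j \<in> R"
    unfolding \<rho>_def using Q(1) \<tau> unfolding mat_over_def by (auto intro!: sum_mem mult_mem)
  have "(\<Sum>j<s. Q' i j * \<rho> j) = \<tau> i" if "i < s" for i
  proof -
    have "(\<Sum>j<s. Q' i j * \<rho> j) = (\<Sum>l<s. mat_mul Q' Q s i l * \<tau> l)"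
      unfolding \<rho>_def mat_mul_def
      by (simp add: sum_distrib_left sum_distrib_right mult.assoc) (rule sum.swap)
    also have "\<dots> = (\<Sum>l<s. if l = i then \<tau> l else 0)" using Q'Q that by (intro sum.cong) auto
    finally show ?thesis using that by (simp add: sum.delta')
  qed
  then show "snf_coord (\<Sum>j<s. \<rho> j * u j) i = (if i < s then D i i * \<tau> i else 0)" if "i < m" for i
    using snf_coord_span[OF \<rho> that] by simp
qed

lemma socle_diag_factor:
  assumes z: "z \<in> PiE diag_support (\<lambda>_. socle)"
  obtains \<tau> where "\<And>i. \<tau> i \<in> R" "\<And>i. i \<in> diag_support \<Longrightarrow> z i = D i i * \<tau> i"
proof -
  have "\<forall>i. \<exists>t. t \<in> R \<and> (i \<in> diag_support \<longrightarrow> z i = D i i * t)"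
  proof
    fix i
    show "\<exists>t. t \<in> R \<and> (i \<in> diag_support \<longrightarrow> z i = D i i * t)"
    proof (cases "i \<in> diag_support")
      case True
      then have "D i i \<in> R" "D i i \<noteq> 0"
        using mat_over_D unfolding diag_support_def mat_over_def by auto
      moreover have "z i \<in> socle" using z True by (rule PiE_mem)
      ultimately have "dvd_in (D i i) (z i)" by (rule dvd_in_socle)
      then show ?thesis using True unfolding dvd_in_def by blast
    qed auto
  qed
  then show ?thesis using that by (auto dest!: choice)
qed

lemma span_mem_span_socle:
  assumes \<rho>: "\<forall>j<s. \<rho> j \<in> R" and soc: "\<forall>i<m. snf_coord (\<Sum>j<s. \<rho> j * u j) i \<in> socle"
  shows "(\<Sum>j<s. \<rho> j * u j) \<in> span_socle u s"
proof -
  have "y * (\<Sum>j<s. \<rho> j * u j) = 0" if y: "y \<in> max_ideal R" for y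
  proof -
    have "snf_coord (y * (\<Sum>j<s. \<rho> j * u j)) i = snf_coord 0 i" if "i < m" for i
      using snf_coord_mult[of y] max_ideal_mem[OF y] soc that y snf_coord_zero
      unfolding socle_def by auto
    then show ?thesis using snf_coord_inj by blast
  qed
  then show ?thesis unfolding span_socle_def using \<rho> by blast
qed

lemma span_socle_onto:
  assumes z: "z \<in> PiE diag_support (\<lambda>_. socle)"
  shows "\<exists>v\<in>span_socle u s. restrict (snf_coord v) diag_support = z"
proof -
  obtain \<tau> where \<tau>: "\<And>i. \<tau> i \<in> R" "\<And>i. i \<in> diag_support \<Longrightarrow> z i = D i i * \<tau> i"
    using socle_diag_factor[OF z] by blast
  obtain \<rho> where \<rho>: "\<forall>j<s. \<rho> j \<in> R"
    and v: "\<And>i. i < m \<Longrightarrow> snf_coord (\<Sum>j<s. \<rho> j * u j) i = (if i < s then D i i * \<tau> i else 0)"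
    using snf_coord_diagonal_combination[of \<tau>] \<tau>(1) by blast
  define v where "v = (\<Sum>j<s. \<rho> j * u j)"
  have zv: "snf_coord v i = (if i \<in> diag_support then z i else 0)" if i: "i < m" for i
  proof (cases "i \<in> diag_support")
    case True
    then have "i < s" unfolding diag_support_def by auto
    then show ?thesis using v[OF i] \<tau>(2)[OF True] True unfolding v_def by simp
  next
    case False
    then have "i < s \<longrightarrow> D i i = 0" using i unfolding diag_support_def by auto
    then show ?thesis using v[OF i] False unfolding v_def by auto
  qed
  have "0 \<in> socle" unfolding socle_def by simp
  then have "v \<in> span_socle u s"
    unfolding v_def using zv PiE_mem[OF z] by (intro span_mem_span_socle[OF \<rho>]) (auto simp: v_def)
  moreover have "restrict (snf_coord v) diag_support = z"
  proof
    fix i show "restrict (snf_coord v) diag_support i = z i"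
    proof (cases "i \<in> diag_support")
      case True
      then have "i < m" unfolding diag_support_def by auto
      then show ?thesis using zv True by simp
    qed (use z PiE_arb in auto)
  qed
  ultimately show ?thesis by blast
qed

(* The socle of the span is the sum of the socles of the D i i R, and the socle of D i i R is
   the socle of R exactly when D i i is nonzero. *)

lemma card_span_socle: "card (span_socle u s) = card socle ^ card diag_support"
proof -
  have "bij_betw (\<lambda>v. restrict (snf_coord v) diag_support) (span_socle u s) (PiE diag_support (\<lambda>_. socle))"
  proof (rule bij_betw_imageI)
    show "inj_on (\<lambda>v. restrict (snf_coord v) diag_support) (span_socle u s)"
    proof (rule inj_onI)
      fix v v' assume v: "v \<in> span_socle u s" and v': "v' \<in> span_socle u s"
        and eq: "restrict (snf_coord v) diag_support = restrict (snf_coord v') diag_support"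
      obtain \<rho> \<rho>' where \<rho>: "\<forall>j<s. \<rho> j \<in> R" "v = (\<Sum>j<s. \<rho> j * u j)"
        and \<rho>': "\<forall>j<s. \<rho>' j \<in> R" "v' = (\<Sum>j<s. \<rho>' j * u j)"
        using v v' unfolding span_socle_def by auto
      have "snf_coord v i = snf_coord v' i" if i: "i < m" for i
      proof (cases "i \<in> diag_support")
        case True
        then show ?thesis using fun_cong[OF eq, of i] by simp
      next
        case False
        then show ?thesis using snf_coord_span[OF \<rho>(1) i] snf_coord_span[OF \<rho>'(1) i] i \<rho>(2) \<rho>'(2)
          unfolding diag_support_def by auto
      qed
      then show "v = v'" using snf_coord_inj by blast
    qed
    show "(\<lambda>v. restrict (snf_coord v) diag_support) ` span_socle u s = PiE diag_support (\<lambda>_. socle)"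
    proof (intro equalityI subsetI)
      fix z assume "z \<in> (\<lambda>v. restrict (snf_coord v) diag_support) ` span_socle u s"
      then obtain v where "v \<in> span_socle u s" "z = restrict (snf_coord v) diag_support" by blast
      then show "z \<in> PiE diag_support (\<lambda>_. socle)"
        using snf_coord_span_socle by (simp add: restrict_PiE_iff)
    next
      fix z assume "z \<in> PiE diag_support (\<lambda>_. socle)"
      then obtain v where v: "v \<in> span_socle u s" and eq: "restrict (snf_coord v) diag_support = z"
        using span_socle_onto by blast
      show "z \<in> (\<lambda>v. restrict (snf_coord v) diag_support) ` span_socle u s"
        using rev_image_eqI[of v _ z "\<lambda>v. restrict (snf_coord v) diag_support", OF v eq[symmetric]] .
    qed
  qed
  then have "card (span_socle u s) = card (PiE diag_support (\<lambda>_. socle))"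
    by (rule bij_betw_same_card)
  also have "\<dots> = card socle ^ card diag_support"
    by (simp add: card_PiE diag_support_def)
  finally show ?thesis .
qed

lemma span_generators:
  "\<exists>g. card {j. j < s \<and> g j \<noteq> 0} \<le> card diag_support \<and> (\<forall>k<s. u k = (\<Sum>j<s. Q' j k * g j))"
proof -
  define g where "g j = (\<Sum>k<s. Q k j * u k)" for j
  have "u k = (\<Sum>j<s. Q' j k * g j)" if k: "k < s" for k
  proof -
    have "(\<Sum>j<s. Q' j k * g j) = (\<Sum>k'<s. mat_mul Q Q' s k' k * u k')"
      unfolding g_def mat_mul_def
      by (simp add: sum_distrib_left sum_distrib_right mult.assoc mult.left_commute) (rule sum.swap)
    also have "\<dots> = (\<Sum>k'<s. if k' = k then u k' else 0)" using QQ' k by (intro sum.cong) auto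
    finally show ?thesis using k by (simp add: sum.delta')
  qed
  moreover have "g j = 0" if j: "j < s" "j \<notin> diag_support" for j
  proof -
    have "\<forall>k<s. Q k j \<in> R" using Q(1) j unfolding mat_over_def by auto
    then have "g j = (\<Sum>k<s. Q k j * u k)" "\<forall>k<s. Q k j \<in> R" unfolding g_def by auto
    have "snf_coord (g j) i = snf_coord 0 i" if i: "i < m" for i
    proof -
      obtain \<tau> where "\<tau> = (\<lambda>l. if l = j then 1 else 0 :: 'a)" by blast
      have "snf_coord (g j) i = (\<Sum>k<s. Q k j * mat_mul P (\<lambda>i j. coord R m B (u j) i) m i k)"
        unfolding g_def snf_coord_def coord_lin[OF basis \<open>\<forall>k<s. Q k j \<in> R\<close>] mat_mul_def
        by (simp add: sum_distrib_left mult.left_commute) (rule sum.swap)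
      also have "\<dots> = D i j"
        unfolding D_def mat_mul_def[of _ Q] by (simp add: mult.commute)
      also have "\<dots> = 0"
        using D_off_diag[OF i j(1)] j i unfolding diag_support_def by (cases "i = j") auto
      finally show ?thesis by (simp add: snf_coord_zero)
    qed
    then show ?thesis using snf_coord_inj by blast
  qed
  then have "{j. j < s \<and> g j \<noteq> 0} \<subseteq> diag_support" by blast
  then have "card {j. j < s \<and> g j \<noteq> 0} \<le> card diag_support"
    by (intro card_mono) (auto simp: diag_support_def)
  ultimately show ?thesis by blast
qed

end

context finite_chain_ring
begin

lemma snf_rank_is_snf_of_span:
  assumes B: "R_basis R m B" and r: "snf_rank_is R m s (\<lambda>i j. coord R m B (u j) i) r"
  obtains P Q P' Q' where "snf_of_span R m s B u P Q P' Q'"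
    and "r = card (snf_of_span.diag_support R m s B u P Q)" and "mat_over R s s Q'"
proof -
  obtain P Q P' Q' where P: "mat_over R m m P" "\<forall>i<m. \<forall>j<m. mat_mul P' P m i j = (if i = j then 1 else 0)"
    and Q: "mat_over R s s Q" "mat_over R s s Q'"
      "\<forall>i<s. \<forall>j<s. mat_mul Q Q' s i j = (if i = j then 1 else 0)"
      "\<forall>i<s. \<forall>j<s. mat_mul Q' Q s i j = (if i = j then 1 else 0)"
    and smith: "smith_form R m s (mat_mul (mat_mul P (\<lambda>i j. coord R m B (u j) i) m) Q s)"
    and r: "r = card {i. i < min m s \<and> mat_mul (mat_mul P (\<lambda>i j. coord R m B (u j) i) m) Q s i i \<noteq> 0}"
    using r unfolding snf_rank_is_def invertible_over_def by blast
  have snf: "snf_of_span R m s B u P Q P' Q'"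
    by unfold_locales (use B P Q smith in auto)
  interpret snf_of_span R m s B u P Q P' Q' by (rule snf)
  have "r = card diag_support" unfolding diag_support_def D_def r ..
  then show ?thesis using that snf Q(2) by blast
qed

lemma rk_is_snf_rank:
  assumes B0: "R_basis R m B0"
  shows "\<exists>B. R_basis R m B \<and> snf_rank_is R m s (\<lambda>i j. coord R m B (u j) i) (rk R m s u)"
proof -
  define A0 where "A0 = (\<lambda>i j. coord R m B0 (u j) i)"
  have "mat_over R m s A0" unfolding A0_def mat_over_def using coord_spec[OF B0] by auto
  then obtain P Q where PQ: "invertible_over R m P" "invertible_over R s Q"
    "smith_form R m s (mat_mul (mat_mul P A0 m) Q s)" using smith_form_exists by blast
  define r0 where "r0 = card {i. i < min m s \<and> mat_mul (mat_mul P A0 m) Q s i i \<noteq> 0}"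
  have ex: "\<exists>B. R_basis R m B \<and> snf_rank_is R m s (\<lambda>i j. coord R m B (u j) i) r0"
    using B0 PQ unfolding snf_rank_is_def r0_def A0_def by blast
  have card_r: "card (span_socle u s) = card socle ^ r"
    if B: "R_basis R m B" "snf_rank_is R m s (\<lambda>i j. coord R m B (u j) i) r" for B r
  proof -
    obtain P Q P' Q' where snf: "snf_of_span R m s B u P Q P' Q'"
      and "r = card (snf_of_span.diag_support R m s B u P Q)" and "mat_over R s s Q'"
      by (rule snf_rank_is_snf_of_span[OF B])
    then show ?thesis using snf_of_span.card_span_socle[OF snf] by simp
  qed
  have uniq: "r = r0" if r: "\<exists>B. R_basis R m B \<and> snf_rank_is R m s (\<lambda>i j. coord R m B (u j) i) r" for r
  proof -
    obtain B B' where B: "R_basis R m B" "snf_rank_is R m s (\<lambda>i j. coord R m B (u j) i) r"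
      and B': "R_basis R m B'" "snf_rank_is R m s (\<lambda>i j. coord R m B' (u j) i) r0"
      using r ex by blast
    have "card socle ^ r = card socle ^ r0" using card_r[OF B] card_r[OF B'] by simp
    then show ?thesis using two_le_card_socle by simp
  qed
  have "rk R m s u = r0" unfolding rk_def
    by (rule the1_equality) (use ex uniq in blast)+
  then show ?thesis using ex by simp
qed

lemma rk_generators:
  assumes "R_basis R m B"
  shows "\<exists>g Q. mat_over R s s Q \<and> card {j. j < s \<and> g j \<noteq> 0} \<le> rk R m s u \<and>
    (\<forall>k<s. u k = (\<Sum>j<s. Q j k * g j))"
proof -
  obtain B' where "R_basis R m B'" "snf_rank_is R m s (\<lambda>i j. coord R m B' (u j) i) (rk R m s u)"
    using rk_is_snf_rank[OF assms] by blast
  then obtain P Q P' Q' where snf: "snf_of_span R m s B' u P Q P' Q'"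
    and "rk R m s u = card (snf_of_span.diag_support R m s B' u P Q)" and "mat_over R s s Q'"
    by (rule snf_rank_is_snf_of_span)
  then show ?thesis using snf_of_span.span_generators[OF snf] by auto
qed

end

section \<open>Skew polynomials\<close>

lemma coeff_sum_monom: "coeff (\<Sum>i<n. monom (c i) i) k = (if k < n then c k else 0)"
  by (simp add: coeff_sum coeff_monom)

lemma sum_sum_if_add_eq:
  fixes c :: "nat \<Rightarrow> nat \<Rightarrow> 'a::comm_monoid_add"
  assumes z1: "\<And>i j. i > N0 \<Longrightarrow> c i j = 0" and z2: "\<And>i j. j > M0 \<Longrightarrow> c i j = 0"
  shows "(\<Sum>i\<le>N0. \<Sum>j\<le>M0. if i + j = k then c i j else 0) = (\<Sum>i\<le>k. c i (k - i))"
proof -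
  define N where "N = max N0 k"
  define M where "M = max M0 k"
  have zz: "(\<Sum>j\<le>M0. if i + j = k then c i j else 0) = 0" if "i > N0" for i
    using z1[OF that] by (intro sum.neutral) auto
  have "(\<Sum>i\<le>N0. \<Sum>j\<le>M0. if i + j = k then c i j else 0) = (\<Sum>i\<le>N. \<Sum>j\<le>M0. if i + j = k then c i j else 0)"
    unfolding N_def by (rule sum.mono_neutral_left) (auto simp: zz)
  also have "\<dots> = (\<Sum>i\<le>N. \<Sum>j\<le>M. if i + j = k then c i j else 0)"
    unfolding M_def by (intro sum.cong refl sum.mono_neutral_left) (auto simp: z2)
  also have "\<dots> = (\<Sum>i\<le>N. if i \<le> k then c i (k - i) else 0)"
  proof (rule sum.cong[OF refl])
    fix i assume i: "i \<in> {..N}"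
    have "(\<Sum>j\<le>M. if i + j = k then c i j else 0) = (\<Sum>j\<le>M. if j = k - i then (if i \<le> k then c i j else 0) else 0)"
      by (intro sum.cong) auto
    also have "\<dots> = (if i \<le> k then c i (k - i) else 0)" unfolding M_def by (simp add: sum.delta) linarith
    finally show "(\<Sum>j\<le>M. if i + j = k then c i j else 0) = (if i \<le> k then c i (k - i) else 0)" .
  qed
  also have "\<dots> = (\<Sum>i\<in>{..N} \<inter> {..k}. c i (k - i))" by (subst sum.inter_restrict) auto
  also have "{..N} \<inter> {..k} = {..k}" unfolding N_def by auto
  finally show ?thesis .
qed

locale ring_automorphism =
  fixes \<sigma> :: "'a::comm_ring_1 \<Rightarrow> 'a"
  assumes aut: "ring_aut \<sigma>"
begin

lemma sigma_add: "\<sigma> (x + y) = \<sigma> x + \<sigma> y" and sigma_mult: "\<sigma> (x * y) = \<sigma> x * \<sigma> y"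
  and sigma_one: "\<sigma> 1 = 1" and sigma_bij: "bij \<sigma>"
  using aut unfolding ring_aut_def by auto

lemma sigma_zero: "\<sigma> 0 = 0"
  using sigma_add[of 0 0] by simp

lemma sigma_uminus: "\<sigma> (- x) = - \<sigma> x"
  using sigma_add[of x "-x"] sigma_zero by (metis neg_eq_iff_add_eq_0 add.right_inverse)

lemma sigma_diff: "\<sigma> (x - y) = \<sigma> x - \<sigma> y"
  using sigma_add[of x "-y"] sigma_uminus[of y] by simp

lemma sigma_inj: "\<sigma> x = \<sigma> y \<Longrightarrow> x = y"
  using sigma_bij bij_def inj_def by metis

lemma sigma_iter_add: "(\<sigma> ^^ i) (x + y) = (\<sigma> ^^ i) x + (\<sigma> ^^ i) y"
  by (induction i) (auto simp: sigma_add)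

lemma sigma_iter_mult: "(\<sigma> ^^ i) (x * y) = (\<sigma> ^^ i) x * (\<sigma> ^^ i) y"
  by (induction i) (auto simp: sigma_mult)

lemma sigma_iter_one: "(\<sigma> ^^ i) 1 = 1"
  by (induction i) (auto simp: sigma_one)

lemma sigma_iter_zero: "(\<sigma> ^^ i) 0 = 0"
  by (induction i) (auto simp: sigma_zero)

lemma sigma_iter_uminus: "(\<sigma> ^^ i) (- x) = - (\<sigma> ^^ i) x"
  by (induction i) (auto simp: sigma_uminus)

lemma sigma_iter_diff: "(\<sigma> ^^ i) (x - y) = (\<sigma> ^^ i) x - (\<sigma> ^^ i) y"
  by (induction i) (auto simp: sigma_diff)

lemma sigma_iter_fixed: "\<sigma> x = x \<Longrightarrow> (\<sigma> ^^ i) x = x"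
  by (induction i) auto

lemma sigma_iter_inj: "(\<sigma> ^^ i) x = (\<sigma> ^^ i) y \<Longrightarrow> x = y"
  by (induction i arbitrary: x y) (auto dest: sigma_inj)

lemma sigma_iter_sum: "(\<sigma> ^^ i) (sum f A) = (\<Sum>x\<in>A. (\<sigma> ^^ i) (f x))"
  by (induction A rule: infinite_finite_induct) (auto simp: sigma_iter_zero sigma_iter_add)

lemma sigma_sum: "\<sigma> (sum f A) = (\<Sum>x\<in>A. \<sigma> (f x))"
  using sigma_iter_sum[of 1] by simp

lemma sigma_iter_S_units:
  assumes "x \<in> S_units"
  shows "(\<sigma> ^^ i) x \<in> S_units" and "(\<sigma> ^^ i) (sinv x) = sinv ((\<sigma> ^^ i) x)"
proof -
  have e: "(\<sigma> ^^ i) x * (\<sigma> ^^ i) (sinv x) = 1"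
    using sinv_right[OF assms] by (simp add: sigma_iter_mult[symmetric] sigma_iter_one)
  then show u: "(\<sigma> ^^ i) x \<in> S_units" unfolding S_units_iff by blast
  have "sinv ((\<sigma> ^^ i) x) = sinv ((\<sigma> ^^ i) x) * ((\<sigma> ^^ i) x * (\<sigma> ^^ i) (sinv x))" using e by simp
  also have "\<dots> = (\<sigma> ^^ i) (sinv x)" using sinv_left[OF u] by (simp add: mult.assoc[symmetric])
  finally show "(\<sigma> ^^ i) (sinv x) = sinv ((\<sigma> ^^ i) x)" ..
qed

lemma coeff_skew_mult: "coeff (skew_mult \<sigma> p q) k = (\<Sum>i\<le>k. coeff p i * (\<sigma> ^^ i) (coeff q (k - i)))"
proof -
  have "coeff (skew_mult \<sigma> p q) k = (\<Sum>i\<le>degree p. \<Sum>j\<le>degree q. if i + j = k then coeff p i * (\<sigma> ^^ i) (coeff q j) else 0)"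
    unfolding skew_mult_def by (simp add: coeff_sum coeff_monom)
  also have "\<dots> = (\<Sum>i\<le>k. coeff p i * (\<sigma> ^^ i) (coeff q (k - i)))"
    by (rule sum_sum_if_add_eq) (auto simp: coeff_eq_0 sigma_iter_zero)
  finally show ?thesis .
qed

lemma degree_skew_mult_le: "degree (skew_mult \<sigma> p q) \<le> degree p + degree q"
proof (rule degree_le, intro allI impI)
  fix k assume k: "k > degree p + degree q"
  show "coeff (skew_mult \<sigma> p q) k = 0" unfolding coeff_skew_mult
  proof (rule sum.neutral, intro ballI)
    fix i assume "i \<in> {..k}"
    then show "coeff p i * (\<sigma> ^^ i) (coeff q (k - i)) = 0"
      using k by (cases "i \<le> degree p") (auto simp: coeff_eq_0 sigma_iter_zero)
  qed
qed

lemma coeff_skew_mult_degree_sum: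
  "coeff (skew_mult \<sigma> p q) (degree p + degree q) = coeff p (degree p) * (\<sigma> ^^ degree p) (coeff q (degree q))"
proof -
  have "coeff (skew_mult \<sigma> p q) (degree p + degree q) =
     (\<Sum>i\<le>degree p + degree q. if i = degree p then coeff p i * (\<sigma> ^^ i) (coeff q (degree p + degree q - i)) else 0)"
    unfolding coeff_skew_mult
  proof (intro sum.cong refl)
    fix i assume "i \<in> {..degree p + degree q}"
    show "coeff p i * (\<sigma> ^^ i) (coeff q (degree p + degree q - i)) =
      (if i = degree p then coeff p i * (\<sigma> ^^ i) (coeff q (degree p + degree q - i)) else 0)"
      by (cases "i < degree p") (auto simp: coeff_eq_0 sigma_iter_zero)
  qed
  then show ?thesis by (simp add: sum.delta)
qed

lemma coeff_skew_mult_linear_right: "coeff (skew_mult \<sigma> Q [:- b, 1:]) k =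
   (if k = 0 then - coeff Q 0 * b else coeff Q (k - 1) - coeff Q k * (\<sigma> ^^ k) b)"
proof (cases k)
  case 0 then show ?thesis by (simp add: coeff_skew_mult)
next
  case (Suc k')
  have "coeff (skew_mult \<sigma> Q [:- b, 1:]) k = (\<Sum>i\<le>k. if i = k' then coeff Q i else if i = k then - coeff Q k * (\<sigma> ^^ k) b else 0)"
    unfolding coeff_skew_mult
  proof (intro sum.cong refl)
    fix i assume "i \<in> {..k}"
    then have "i \<le> k" by simp
    then consider "i = k'" | "i = k" | "i < k'" using Suc by linarith
    then show "coeff Q i * (\<sigma> ^^ i) (coeff [:- b, 1:] (k - i)) = (if i = k' then coeff Q i else if i = k then - coeff Q k * (\<sigma> ^^ k) b else 0)"
    proof cases
      case 1 then show ?thesis using Suc by (simp add: sigma_iter_one)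
    next
      case 2 then show ?thesis using Suc by (simp add: sigma_iter_uminus sigma_uminus)
    next
      case 3 then have "k - i \<ge> 2" using Suc by linarith
      then have "coeff [:- b, 1:] (k - i) = 0" by (simp add: coeff_eq_0)
      then show ?thesis using 3 Suc by (simp add: sigma_iter_zero)
    qed
  qed
  also have "\<dots> = (\<Sum>i\<le>k. (if i = k' then coeff Q i else 0) + (if i = k then - coeff Q k * (\<sigma> ^^ k) b else 0))"
    using Suc by (intro sum.cong) auto
  also have "\<dots> = coeff Q k' - coeff Q k * (\<sigma> ^^ k) b"
    unfolding sum.distrib using Suc by (simp only: sum.delta finite_atMost) simp
  finally show ?thesis using Suc by simp
qed

lemma skew_remainder_unique:
  assumes eq: "skew_mult \<sigma> Q1 [:- b, 1:] + [:c1:] = skew_mult \<sigma> Q2 [:- b, 1:] + [:c2:]"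
  shows "c1 = c2"
proof -
  have ck: "coeff Q1 (k - 1) - coeff Q1 k * (\<sigma> ^^ k) b = coeff Q2 (k - 1) - coeff Q2 k * (\<sigma> ^^ k) b"
    if "k > 0" for k
    using arg_cong[OF eq, of "\<lambda>p. coeff p k"] that by (simp add: coeff_skew_mult_linear_right coeff_pCons split: nat.splits)
  define N where "N = Suc (max (degree Q1) (degree Q2))"
  have "coeff Q1 (N - d) = coeff Q2 (N - d)" for d
  proof (induction d)
    case 0 then show ?case unfolding N_def by (simp add: coeff_eq_0)
  next
    case (Suc d)
    show ?case
    proof (cases "Suc d \<le> N")
      case True
      then have k: "N - d = Suc (N - Suc d)" by simp
      have "coeff Q1 (N - Suc d) - coeff Q1 (N - d) * (\<sigma> ^^ (N - d)) b =
            coeff Q2 (N - Suc d) - coeff Q2 (N - d) * (\<sigma> ^^ (N - d)) b"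
        using ck[of "N - d"] k by simp
      then show ?thesis using Suc.IH by simp
    next
      case False then have "N - Suc d = N - d" by simp
      then show ?thesis using Suc.IH by simp
    qed
  qed
  then have "coeff Q1 0 = coeff Q2 0" by (metis diff_self_eq_0)
  moreover have "- coeff Q1 0 * b + c1 = - coeff Q2 0 * b + c2"
    using arg_cong[OF eq, of "\<lambda>p. coeff p 0"] by (simp add: coeff_skew_mult_linear_right)
  ultimately show ?thesis by simp
qed

lemma Nrm_0 [simp]: "Nrm \<sigma> 0 b = 1"
  unfolding Nrm_def by simp

lemma Nrm_Suc: "Nrm \<sigma> (Suc i) b = Nrm \<sigma> i b * (\<sigma> ^^ i) b"
  unfolding Nrm_def by simp

lemma Nrm_shift: "i > 0 \<Longrightarrow> Nrm \<sigma> i b = b * (\<Prod>l\<in>{Suc 0..<i}. (\<sigma> ^^ l) b)"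
  unfolding Nrm_def lessThan_atLeast0 by (subst prod.atLeast_Suc_lessThan) auto

lemma skew_remainder_exists:
  "\<exists>Q. P = skew_mult \<sigma> Q [:- b, 1:] + [:(\<Sum>i\<le>degree P. coeff P i * Nrm \<sigma> i b):]"
proof -
  define dP where "dP = degree P"
  define Qc where "Qc j = (\<Sum>i\<in>{Suc j..dP}. coeff P i * (\<Prod>l\<in>{Suc j..<i}. (\<sigma> ^^ l) b))" for j
  define Q where "Q = (\<Sum>j<dP. monom (Qc j) j)"
  have cQ: "coeff Q j = Qc j" for j
    unfolding Q_def coeff_sum_monom Qc_def by auto
  define c where "c = (\<Sum>i\<le>dP. coeff P i * Nrm \<sigma> i b)"
  have "P = skew_mult \<sigma> Q [:- b, 1:] + [:c:]"
  proof (rule poly_eqI)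
    fix k
    show "coeff P k = coeff (skew_mult \<sigma> Q [:- b, 1:] + [:c:]) k"
    proof (cases k)
      case 0
      have "Qc 0 * b = (\<Sum>i\<in>{Suc 0..dP}. coeff P i * Nrm \<sigma> i b)"
        unfolding Qc_def sum_distrib_right
        by (intro sum.cong refl) (simp add: Nrm_shift mult_ac)
      moreover have "c = coeff P 0 + (\<Sum>i\<in>{Suc 0..dP}. coeff P i * Nrm \<sigma> i b)"
        unfolding c_def atMost_atLeast0 by (subst sum.atLeast_Suc_atMost) auto
      ultimately show ?thesis using 0 by (simp add: coeff_skew_mult_linear_right cQ)
    next
      case (Suc k')
      show ?thesis
      proof (cases "k \<le> dP")
        case True
        have "Qc k' = coeff P k + (\<Sum>i\<in>{Suc k..dP}. coeff P i * (\<Prod>l\<in>{k..<i}. (\<sigma> ^^ l) b))"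
          unfolding Qc_def Suc[symmetric] using True by (subst sum.atLeast_Suc_atMost) auto
        also have "(\<Sum>i\<in>{Suc k..dP}. coeff P i * (\<Prod>l\<in>{k..<i}. (\<sigma> ^^ l) b)) = Qc k * (\<sigma> ^^ k) b"
          unfolding Qc_def sum_distrib_right
          by (intro sum.cong refl) (simp add: prod.atLeast_Suc_lessThan mult_ac)
        finally show ?thesis using Suc by (simp add: coeff_skew_mult_linear_right cQ)
      next
        case False
        then have "Qc k' = 0" "Qc k = 0" "coeff P k = 0" unfolding Qc_def dP_def using Suc
          by (auto simp: coeff_eq_0)
        then show ?thesis using Suc by (simp add: coeff_skew_mult_linear_right cQ)
      qed
    qed
  qed
  then show ?thesis unfolding c_def dP_def by blast
qed

lemma skew_eval_eq_sum: "skew_eval \<sigma> P b = (\<Sum>i\<le>degree P. coeff P i * Nrm \<sigma> i b)"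
  unfolding skew_eval_def
  by (rule the_equality) (use skew_remainder_exists skew_remainder_unique in blast)+

lemma skew_eval_eq_sum_lessThan:
  "degree P < N \<Longrightarrow> skew_eval \<sigma> P b = (\<Sum>i<N. coeff P i * Nrm \<sigma> i b)"
  unfolding skew_eval_eq_sum by (intro sum.mono_neutral_left) (auto simp: coeff_eq_0)

lemma Nrm_add: "Nrm \<sigma> (i + j) b = (\<sigma> ^^ i) (Nrm \<sigma> j b) * Nrm \<sigma> i b"
proof (induction j)
  case 0 then show ?case by (simp add: sigma_iter_one)
next
  case (Suc j)
  have "Nrm \<sigma> (i + Suc j) b = Nrm \<sigma> (i + j) b * (\<sigma> ^^ (i + j)) b"
    using Nrm_Suc[of "i + j" b] by simp
  also have "\<dots> = (\<sigma> ^^ i) (Nrm \<sigma> j b) * Nrm \<sigma> i b * (\<sigma> ^^ i) ((\<sigma> ^^ j) b)"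
    using Suc by (simp add: funpow_add)
  also have "\<dots> = (\<sigma> ^^ i) (Nrm \<sigma> (Suc j) b) * Nrm \<sigma> i b"
    by (simp add: Nrm_Suc sigma_iter_mult mult_ac)
  finally show ?case .
qed

lemma skew_eval_skew_mult: "skew_eval \<sigma> (skew_mult \<sigma> L P) b =
   (\<Sum>s\<le>degree L. coeff L s * (\<sigma> ^^ s) (skew_eval \<sigma> P b) * Nrm \<sigma> s b)"
proof -
  define N where "N = Suc (degree L + degree P)"
  define g where "g i j = coeff L i * (\<sigma> ^^ i) (coeff P j) * Nrm \<sigma> (i + j) b" for i j
  have "skew_eval \<sigma> (skew_mult \<sigma> L P) b = (\<Sum>k<N. coeff (skew_mult \<sigma> L P) k * Nrm \<sigma> k b)"
    using degree_skew_mult_le[of L P] unfolding N_def by (intro skew_eval_eq_sum_lessThan) auto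
  also have "\<dots> = (\<Sum>k<N. \<Sum>i\<le>k. g i (k - i))"
    unfolding coeff_skew_mult sum_distrib_right g_def by (intro sum.cong refl) auto
  also have "\<dots> = (\<Sum>(i, j)\<in>{(i, j). i + j < N}. g i j)" by (rule sum.triangle_reindex[symmetric])
  also have "{(i, j). i + j < N} = Sigma {..<N} (\<lambda>i. {..<N - i})" by auto
  also have "(\<Sum>(i, j)\<in>Sigma {..<N} (\<lambda>i. {..<N - i}). g i j) = (\<Sum>i<N. \<Sum>j<N - i. g i j)"
    by (rule sum.Sigma[symmetric]) auto
  also have "\<dots> = (\<Sum>i<N. coeff L i * (\<sigma> ^^ i) (skew_eval \<sigma> P b) * Nrm \<sigma> i b)"
  proof (intro sum.cong refl)
    fix i assume "i \<in> {..<N}"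
    show "(\<Sum>j<N - i. g i j) = coeff L i * (\<sigma> ^^ i) (skew_eval \<sigma> P b) * Nrm \<sigma> i b"
    proof (cases "i \<le> degree L")
      case True
      then have "degree P < N - i" unfolding N_def by linarith
      then have ev: "skew_eval \<sigma> P b = (\<Sum>j<N - i. coeff P j * Nrm \<sigma> j b)" by (rule skew_eval_eq_sum_lessThan)
      show ?thesis unfolding ev g_def Nrm_add sigma_iter_sum sigma_iter_mult
        by (simp add: sum_distrib_left sum_distrib_right mult_ac)
    next
      case False then show ?thesis unfolding g_def by (simp add: coeff_eq_0)
    qed
  qed
  also have "\<dots> = (\<Sum>s\<le>degree L. coeff L s * (\<sigma> ^^ s) (skew_eval \<sigma> P b) * Nrm \<sigma> s b)"
    unfolding N_def by (intro sum.mono_neutral_right) (auto simp: coeff_eq_0)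
  finally show ?thesis .
qed

lemma Nrm_sconj:
  assumes u: "\<beta> \<in> S_units"
  shows "Nrm \<sigma> s (\<sigma> \<beta> * a * sinv \<beta>) = (\<sigma> ^^ s) \<beta> * Nrm \<sigma> s a * sinv \<beta>"
proof (induction s)
  case 0 then show ?case using sinv_right[OF u] by simp
next
  case (Suc s)
  have su: "(\<sigma> ^^ s) (sinv \<beta>) = sinv ((\<sigma> ^^ s) \<beta>)" and us: "((\<sigma> ^^ s) \<beta>) \<in> S_units"
    using sigma_iter_S_units[OF u] by auto
  have "Nrm \<sigma> (Suc s) (\<sigma> \<beta> * a * sinv \<beta>) =
     (\<sigma> ^^ s) \<beta> * Nrm \<sigma> s a * sinv \<beta> * ((\<sigma> ^^ Suc s) \<beta> * (\<sigma> ^^ s) a * sinv ((\<sigma> ^^ s) \<beta>))"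
    unfolding Nrm_Suc Suc sigma_iter_mult su by (simp add: funpow_Suc_right del: funpow.simps)
  also have "\<dots> = ((\<sigma> ^^ s) \<beta> * sinv ((\<sigma> ^^ s) \<beta>)) * ((\<sigma> ^^ Suc s) \<beta> * (Nrm \<sigma> s a * (\<sigma> ^^ s) a) * sinv \<beta>)"
    by (simp add: mult_ac)
  also have "\<dots> = (\<sigma> ^^ Suc s) \<beta> * Nrm \<sigma> (Suc s) a * sinv \<beta>"
    using sinv_right[OF us] by (simp add: Nrm_Suc mult_ac)
  finally show ?case .
qed

definition D_eval :: "'a \<Rightarrow> 'a poly \<Rightarrow> 'a \<Rightarrow> 'a" where
  "D_eval a L y = (\<Sum>s\<le>degree L. coeff L s * Dop \<sigma> s a y)"

lemma D_eval_eq_sum_lessThan: "degree L < N \<Longrightarrow> D_eval a L y = (\<Sum>s<N. coeff L s * Dop \<sigma> s a y)"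
  unfolding D_eval_def by (intro sum.mono_neutral_left) (auto simp: coeff_eq_0)

lemma sum_Nrm_sconj_eq_D_eval:
  assumes u: "\<beta> \<in> S_units"
  shows "(\<Sum>s\<le>degree L. coeff L s * (\<sigma> ^^ s) z * Nrm \<sigma> s (\<sigma> \<beta> * a * sinv \<beta>)) = D_eval a L (z * \<beta>) * sinv \<beta>"
  unfolding D_eval_def Dop_def Nrm_sconj[OF u] sum_distrib_right sigma_iter_mult by (simp add: mult_ac)

lemma Dop_Suc: "Dop \<sigma> (Suc s) a y = \<sigma> (Dop \<sigma> s a y) * a"
proof -
  have "Nrm \<sigma> (Suc s) a = \<sigma> (Nrm \<sigma> s a) * a" using Nrm_add[of 1 s a] by (simp add: Nrm_def)
  then show ?thesis unfolding Dop_def by (simp add: sigma_mult mult_ac funpow_swap1 del: funpow.simps add: funpow_Suc_right)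
qed

lemma Dop_zero: "Dop \<sigma> s a 0 = 0"
  unfolding Dop_def by (simp add: sigma_iter_zero)

lemma D_eval_zero: "D_eval a L 0 = 0"
  unfolding D_eval_def by (simp add: Dop_zero)

lemma D_eval_linear:
  assumes rho: "\<forall>k<n. \<sigma> (\<rho> k) = \<rho> k"
  shows "D_eval a L (\<Sum>k<n. \<rho> k * y k) = (\<Sum>k<n. \<rho> k * D_eval a L (y k))"
proof -
  have "Dop \<sigma> s a (\<Sum>k<n. \<rho> k * y k) = (\<Sum>k<n. \<rho> k * Dop \<sigma> s a (y k))" for s
    unfolding Dop_def sigma_iter_sum sigma_iter_mult sum_distrib_right using rho by (intro sum.cong refl) (simp add: sigma_iter_fixed mult_ac)
  then show ?thesis unfolding D_eval_def
    by (simp add: sum_distrib_left mult_ac) (rule sum.swap)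
qed

lemma coeff_skew_mult_linear_left:
  "coeff (skew_mult \<sigma> [:- \<alpha>, 1:] L) k = - \<alpha> * coeff L k + (if k = 0 then 0 else \<sigma> (coeff L (k - 1)))"
proof (cases k)
  case 0 then show ?thesis by (simp add: coeff_skew_mult)
next
  case (Suc k')
  have "coeff (skew_mult \<sigma> [:- \<alpha>, 1:] L) k = (\<Sum>i\<le>k. (if i = 0 then - \<alpha> * coeff L k else 0) + (if i = 1 then \<sigma> (coeff L k') else 0))"
    unfolding coeff_skew_mult
  proof (intro sum.cong refl)
    fix i assume "i \<in> {..k}"
    consider "i = 0" | "i = 1" | "i \<ge> 2" by linarith
    then show "coeff [:- \<alpha>, 1:] i * (\<sigma> ^^ i) (coeff L (k - i)) =
       (if i = 0 then - \<alpha> * coeff L k else 0) + (if i = 1 then \<sigma> (coeff L k') else 0)"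
    proof cases
      case 3 then have "coeff [:- \<alpha>, 1:] i = 0" by (simp add: coeff_eq_0)
      then show ?thesis using 3 by simp
    qed (use Suc in auto)
  qed
  also have "\<dots> = - \<alpha> * coeff L k + \<sigma> (coeff L k')"
    unfolding sum.distrib using Suc by (simp only: sum.delta finite_atMost) simp
  finally show ?thesis using Suc by simp
qed

lemma skew_mult_linear_left_monic:
  assumes "lead_coeff L = 1"
  shows "degree (skew_mult \<sigma> [:- \<alpha>, 1:] L) = Suc (degree L)"
    and "lead_coeff (skew_mult \<sigma> [:- \<alpha>, 1:] L) = 1"
proof -
  have top: "coeff (skew_mult \<sigma> [:- \<alpha>, 1:] L) (Suc (degree L)) = 1"
    unfolding coeff_skew_mult_linear_left using assms by (simp add: coeff_eq_0 sigma_one)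
  have "degree (skew_mult \<sigma> [:- \<alpha>, 1:] L) \<le> Suc (degree L)"
    by (rule degree_le) (auto simp: coeff_skew_mult_linear_left coeff_eq_0 sigma_zero)
  moreover have "Suc (degree L) \<le> degree (skew_mult \<sigma> [:- \<alpha>, 1:] L)"
    using top by (intro le_degree) simp
  ultimately show d: "degree (skew_mult \<sigma> [:- \<alpha>, 1:] L) = Suc (degree L)" by simp
  show "lead_coeff (skew_mult \<sigma> [:- \<alpha>, 1:] L) = 1" unfolding d by (rule top)
qed

lemma D_eval_skew_mult_linear:
  "D_eval a (skew_mult \<sigma> [:- \<alpha>, 1:] L) y = \<sigma> (D_eval a L y) * a - \<alpha> * D_eval a L y"
proof -
  define M where "M = Suc (degree L)"
  have d: "degree (skew_mult \<sigma> [:- \<alpha>, 1:] L) < Suc M"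
    using degree_skew_mult_le[of "[:- \<alpha>, 1:]" L] unfolding M_def by (cases "\<alpha> = 0") auto
  have "D_eval a (skew_mult \<sigma> [:- \<alpha>, 1:] L) y =
     (\<Sum>k<Suc M. - \<alpha> * (coeff L k * Dop \<sigma> k a y)) + (\<Sum>k<Suc M. (if k = 0 then 0 else \<sigma> (coeff L (k - 1))) * Dop \<sigma> k a y)"
    unfolding D_eval_eq_sum_lessThan[OF d] coeff_skew_mult_linear_left sum.distrib[symmetric] by (intro sum.cong refl) (simp add: algebra_simps)
  also have "(\<Sum>k<Suc M. - \<alpha> * (coeff L k * Dop \<sigma> k a y)) = - \<alpha> * D_eval a L y"
    unfolding sum_distrib_left[symmetric] by (subst D_eval_eq_sum_lessThan[of L "Suc M"]) (auto simp: M_def)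
  also have "(\<Sum>k<Suc M. (if k = 0 then 0 else \<sigma> (coeff L (k - 1))) * Dop \<sigma> k a y) =
       (\<Sum>j<M. \<sigma> (coeff L j) * Dop \<sigma> (Suc j) a y)"
    unfolding sum.lessThan_Suc_shift by simp
  also have "\<dots> = \<sigma> (\<Sum>j<M. coeff L j * Dop \<sigma> j a y) * a"
    unfolding Dop_Suc sigma_sum sum_distrib_right by (simp add: sigma_mult mult_ac)
  also have "(\<Sum>j<M. coeff L j * Dop \<sigma> j a y) = D_eval a L y"
    by (rule D_eval_eq_sum_lessThan[symmetric]) (simp add: M_def)
  finally show ?thesis by simp
qed

lemma D_eval_diff: "D_eval a L (y - y') = D_eval a L y - D_eval a L y'"
  unfolding D_eval_def Dop_def sigma_iter_diff by (simp add: algebra_simps sum_subtractf)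

lemma skew_eval_skew_mult_sconj:
  assumes "\<beta> \<in> S_units" "b = \<sigma> \<beta> * a * sinv \<beta>"
  shows "skew_eval \<sigma> (skew_mult \<sigma> L P) b = D_eval a L (skew_eval \<sigma> P b * \<beta>) * sinv \<beta>"
  using skew_eval_skew_mult[of L P b] sum_Nrm_sconj_eq_D_eval[OF assms(1), of L "skew_eval \<sigma> P b" a]
  unfolding assms(2) by simp

lemma exists_monic_annihilator:
  assumes twist: "\<And>a z. \<exists>\<alpha>. \<sigma> z * a = \<alpha> * z" and "finite P"
  shows "\<exists>L. lead_coeff L = 1 \<and> degree L = card P \<and> (\<forall>(a, y)\<in>P. D_eval a L y = 0)"
  using \<open>finite P\<close>
proof (induction P rule: finite_induct)
  case empty
  show ?case by (intro exI[of _ 1]) simp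
next
  case (insert p P)
  obtain a y where p: "p = (a, y)" by fastforce
  obtain L where L: "lead_coeff L = 1" "degree L = card P" "\<forall>(a, y)\<in>P. D_eval a L y = 0"
    using insert.IH by blast
  obtain \<alpha> where \<alpha>: "\<sigma> (D_eval a L y) * a = \<alpha> * D_eval a L y" using twist by blast
  define L' where "L' = skew_mult \<sigma> [:- \<alpha>, 1:] L"
  have "D_eval a L' y = 0" unfolding L'_def D_eval_skew_mult_linear \<alpha> by simp
  moreover have "D_eval a' L' y' = 0" if "(a', y') \<in> P" for a' y'
    unfolding L'_def D_eval_skew_mult_linear using L(3) that by (auto simp: sigma_zero)
  ultimately show ?case
    using skew_mult_linear_left_monic[OF L(1), of \<alpha>] L(2) p insert(1,2) unfolding L'_def[symmetric]
    by (intro exI[of _ L']) auto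
qed

end

section \<open>Polynomials over a chain ring\<close>

definition poly_over :: "'a::comm_ring_1 set \<Rightarrow> 'a poly \<Rightarrow> bool" where
  "poly_over R p \<longleftrightarrow> (\<forall>i. coeff p i \<in> R)"

lemma poly_eq_sum_lessThan: "degree p < N \<Longrightarrow> poly p x = (\<Sum>i<N. coeff p i * x ^ i)"
  for x :: "'a::comm_semiring_1"
proof -
  assume "degree p < N"
  then have "(\<Sum>i\<le>degree p. coeff p i * x ^ i) = (\<Sum>i<N. coeff p i * x ^ i)"
    by (intro sum.mono_neutral_left) (auto simp: coeff_eq_0)
  then show ?thesis by (simp add: poly_altdef)
qed

lemma degree_sub_monic_multiple_less:
  fixes f g :: "'a::comm_ring_1 poly"
  assumes g: "lead_coeff g = 1" and deg: "degree g \<le> degree f" "0 < degree f"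
  shows "degree (f - monom (lead_coeff f) (degree f - degree g) * g) < degree f"
proof -
  let ?d = "degree f - degree g"
  have "coeff (monom (lead_coeff f) ?d * g) i = coeff f i" if "degree f \<le> i" for i
  proof (cases "i = degree f")
    case True
    then have "i - ?d = degree g" using deg by simp
    then show ?thesis using True g by (simp add: coeff_monom_mult)
  next
    case False
    then have "degree g < i - ?d" "degree f < i" using that deg by auto
    then show ?thesis by (simp add: coeff_monom_mult coeff_eq_0)
  qed
  then have "degree (f - monom (lead_coeff f) ?d * g) \<le> degree f - 1"
    using deg(2) by (intro degree_le) auto
  then show ?thesis using deg(2) by linarith
qed

context finite_chain_ring
begin

lemma poly_over_add: "poly_over R p \<Longrightarrow> poly_over R q \<Longrightarrow> poly_over R (p + q)"
  unfolding poly_over_def by auto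

lemma poly_over_diff: "poly_over R p \<Longrightarrow> poly_over R q \<Longrightarrow> poly_over R (p - q)"
  unfolding poly_over_def by auto

lemma poly_over_mult: "poly_over R p \<Longrightarrow> poly_over R q \<Longrightarrow> poly_over R (p * q)"
  unfolding poly_over_def by (auto simp: coeff_mult)

lemma poly_over_monom: "c \<in> R \<Longrightarrow> poly_over R (monom c n)"
  unfolding poly_over_def by (auto simp: coeff_monom)

lemma poly_over_zero: "poly_over R 0"
  unfolding poly_over_def by auto

lemma monic_division_over:
  assumes g: "poly_over R g" "lead_coeff g = 1" and f: "poly_over R f"
  shows "\<exists>q s. poly_over R q \<and> poly_over R s \<and> f = q * g + s \<and> (s = 0 \<or> degree s < degree g)"
  using f
proof (induction "degree f" arbitrary: f rule: less_induct)
  case less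
  show ?case
  proof (cases "degree f < degree g")
    case True
    then show ?thesis using less.prems by (intro exI[of _ 0] exI[of _ f]) (auto simp: poly_over_zero)
  next
    case False
    show ?thesis
    proof (cases "degree f = 0")
      case True
      then have "g = 1" using False g(2) degree_0_id[of g] by (simp add: one_pCons)
      then show ?thesis using less.prems by (intro exI[of _ f] exI[of _ 0]) (auto simp: poly_over_zero)
    next
      case f_pos: False
      define t where "t = monom (lead_coeff f) (degree f - degree g)"
      have t: "poly_over R t" unfolding t_def using less.prems by (auto simp: poly_over_def coeff_monom)
      have "degree (f - t * g) < degree f"
        unfolding t_def using g(2) False f_pos by (intro degree_sub_monic_multiple_less) auto
      moreover have "poly_over R (f - t * g)"
        using less.prems g t by (intro poly_over_diff poly_over_mult)
      ultimately obtain q s where qs: "poly_over R q" "poly_over R s" "f - t * g = q * g + s"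
        "s = 0 \<or> degree s < degree g"
        using less.hyps by blast
      have "f = (q + t) * g + s" using qs(3) by (simp add: algebra_simps)
      moreover have "poly_over R (q + t)" using qs(1) t by (rule poly_over_add)
      ultimately show ?thesis using qs by blast
    qed
  qed
qed

lemma poly_max_ideal_coeffs:
  assumes "\<forall>i. coeff p i \<in> max_ideal R"
  shows "\<exists>w. poly p x = \<pi> * w"
proof -
  have "\<forall>i. \<exists>z. coeff p i = \<pi> * z" using assms dvd_in_pi unfolding dvd_in_def by blast
  then obtain z where z: "\<And>i. coeff p i = \<pi> * z i" by metis
  have "poly p x = \<pi> * (\<Sum>i\<le>degree p. z i * x ^ i)"
    unfolding poly_altdef z by (simp add: sum_distrib_left mult.assoc)
  then show ?thesis by blast
qed

lemma one_plus_pi_mult_S_units: "1 + \<pi> * y \<in> S_units"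
proof -
  obtain K where K: "\<pi> ^ Suc K = 0" using pi_power_order by blast
  define z where "z = - (\<pi> * y)"
  have "z ^ Suc K = (- y) ^ Suc K * \<pi> ^ Suc K"
    unfolding z_def by (simp only: power_mult_distrib mult.commute[of \<pi>] minus_mult_left)
  then have "z ^ Suc K = 0" using K by simp
  then have "(1 - z) * (\<Sum>i<Suc K. z ^ i) = 1"
    using one_diff_power_eq[of z "Suc K"] by simp
  then show ?thesis unfolding S_units_iff z_def by auto
qed

lemma S_units_add_pi_mult:
  assumes u: "x \<in> S_units"
  shows "x + \<pi> * w \<in> S_units"
proof -
  have "x * (1 + \<pi> * (w * sinv x)) = x + \<pi> * w * (x * sinv x)"
    by (simp add: algebra_simps)
  then have "x + \<pi> * w = x * (1 + \<pi> * (w * sinv x))"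
    using sinv_right[OF u] by simp
  then show ?thesis using u one_plus_pi_mult_S_units by (simp add: S_units_mult_iff)
qed

(* Split f at its highest unit coefficient c: f = c * g + pi * w with g monic. *)

lemma poly_S_units_if_coeff_unit:
  assumes f: "poly_over R f" and ex: "\<exists>i. coeff f i \<notin> max_ideal R"
    and monic: "\<And>g. poly_over R g \<Longrightarrow> lead_coeff g = 1 \<Longrightarrow> degree g \<le> degree f \<Longrightarrow> poly g x \<in> S_units"
  shows "poly f x \<in> S_units"
proof -
  define D where "D = {i. coeff f i \<notin> max_ideal R}"
  have Dsub: "D \<subseteq> {..degree f}"
  proof
    fix i assume "i \<in> D"
    then have "coeff f i \<noteq> 0" unfolding D_def by auto
    then show "i \<in> {..degree f}" by (simp add: le_degree)
  qed
  define d where "d = Max D"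
  have dD: "d \<in> D" unfolding d_def using Dsub ex finite_subset
    by (intro Max_in) (auto simp: D_def)
  have dle: "d \<le> degree f" using dD Dsub by auto
  have above: "coeff f i \<in> max_ideal R" if "i > d" for i
    using that Max_ge[of D i] Dsub finite_subset unfolding d_def D_def by fastforce
  define c where "c = coeff f d"
  have cR: "c \<in> R" using f unfolding c_def poly_over_def by auto
  have cnm: "c \<notin> max_ideal R" using dD unfolding D_def c_def by auto
  obtain u where u: "u \<in> R" "c * u = 1" using inverse_mem_if_not_max_ideal[OF cR cnm] by auto
  define g where "g = (\<Sum>i<Suc d. monom (if i = d then 1 else u * coeff f i) i)"
  have cg: "coeff g i = (if i < Suc d then (if i = d then 1 else u * coeff f i) else 0)" for i
    unfolding g_def by (rule coeff_sum_monom)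
  have dg: "degree g = d"
    by (rule antisym) (auto intro: degree_le le_degree simp: cg)
  have "poly g x \<in> S_units"
    using f u dle by (intro monic) (auto simp: poly_over_def cg dg)
  moreover have "c \<in> S_units" using u unfolding S_units_iff by auto
  moreover have "coeff (f - smult c g) i \<in> max_ideal R" for i
  proof -
    consider "i < d" | "i = d" | "i > d" by linarith
    then show ?thesis
      by cases (use u(2) above in \<open>auto simp: cg c_def mult.assoc[symmetric]\<close>)
  qed
  then obtain w where "poly (f - smult c g) x = \<pi> * w" using poly_max_ideal_coeffs by blast
  then have "poly f x = c * poly g x + \<pi> * w" by (simp add: algebra_simps)
  ultimately show ?thesis by (simp add: S_units_add_pi_mult S_units_mult_iff)
qed

end

section \<open>Galois extensions of chain rings\<close>

locale galois_extension =
  fixes R :: "'a::{comm_ring_1,finite} set" and h :: "'a poly" and m :: nat and \<theta> :: 'a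
    and \<sigma> :: "'a \<Rightarrow> 'a"
  assumes setting: "galois_setting R h m \<theta> \<sigma>"
begin

sublocale finite_chain_ring R
  using setting unfolding galois_setting_def by unfold_locales auto

sublocale ring_automorphism \<sigma>
  using setting unfolding galois_setting_def by unfold_locales auto

lemma h_poly_over: "poly_over R h" and h_monic: "lead_coeff h = 1" and degree_h: "degree h = m"
  and h_irred: "irred_mod R h" and h_theta: "poly h \<theta> = 0" and theta_basis: "R_basis R m (\<lambda>i. \<theta> ^ i)"
  and sigma_fixed_iff: "\<sigma> x = x \<longleftrightarrow> x \<in> R"
  using setting unfolding galois_setting_def poly_over_def by auto

lemma no_monic_factor_mod_max_ideal:
  assumes g: "poly_over R g" "lead_coeff g = 1" "0 < degree g" "degree g < m"
    and q: "poly_over R q" and hqs: "h = q * g + s" and s: "s = 0 \<or> degree s < degree g"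
    and s_max: "\<forall>i. coeff s i \<in> max_ideal R"
  shows False
proof -
  have "q \<noteq> 0"
    using hqs s g(4) h_monic degree_h by auto
  have lq: "coeff (q * g) (degree q + degree g) = lead_coeff q"
    using coeff_mult_degree_sum[of q g] g(2) by simp
  then have dqg: "degree (q * g) = degree q + degree g"
    using \<open>q \<noteq> 0\<close> degree_mult_le[of q g] le_degree[of "q * g" "degree q + degree g"] by auto
  have "degree h = degree (q * g)"
    using s hqs dqg degree_add_eq_left[of s "q * g"] by (auto simp: add.commute)
  then have mdeg: "m = degree q + degree g" using degree_h dqg by simp
  have "coeff s m = 0" using s g(4) by (auto intro: coeff_eq_0)
  then have "lead_coeff q = 1" using hqs mdeg lq h_monic degree_h by simp
  then have "\<exists>f g. (\<forall>i. coeff f i \<in> R) \<and> (\<forall>i. coeff g i \<in> R) \<and>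
      lead_coeff f = 1 \<and> lead_coeff g = 1 \<and> degree f \<ge> 1 \<and> degree g \<ge> 1 \<and>
      (\<forall>i. coeff (h - f * g) i \<in> max_ideal R)"
    using q g hqs mdeg s_max unfolding poly_over_def
    by (intro exI[of _ q] exI[of _ g]) auto
  then show False using h_irred unfolding irred_mod_def by blast
qed

lemma monic_poly_theta_S_units:
  assumes "poly_over R g" "lead_coeff g = 1" "degree g < m"
  shows "poly g \<theta> \<in> S_units"
  using assms
proof (induction "degree g" arbitrary: g rule: less_induct)
  case less
  show ?case
  proof (cases "degree g = 0")
    case True
    then have "g = 1" using less.prems(2) by (metis lead_coeff_1 degree_0_id one_pCons)
    then show ?thesis by simp
  next
    case False
    obtain q s where qs: "poly_over R q" "poly_over R s" "h = q * g + s" "s = 0 \<or> degree s < degree g"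
      using monic_division_over[of g h] less.prems h_poly_over by blast
    have eq: "poly q \<theta> * poly g \<theta> = - poly s \<theta>"
      using h_theta qs(3) by (simp add: eq_neg_iff_add_eq_0)
    show ?thesis
    proof (cases "\<exists>i. coeff s i \<notin> max_ideal R")
      case True
      then have "degree s < degree g" using qs(4) by auto
      then have "poly s \<theta> \<in> S_units"
        using poly_S_units_if_coeff_unit[OF qs(2) True] less.hyps less.prems(3) by auto
      then have "poly q \<theta> * poly g \<theta> \<in> S_units" unfolding eq by (simp add: S_units_uminus_iff)
      then show ?thesis by (simp add: S_units_mult_iff)
    next
      case False
      then show ?thesis
        using no_monic_factor_mod_max_ideal[OF less.prems(1,2) _ less.prems(3) qs(1,3,4)] \<open>degree g \<noteq> 0\<close>
        by auto
    qed
  qed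
qed

lemma pi_dvd_non_unit:
  assumes "z \<notin> S_units"
  shows "\<exists>w. z = \<pi> * w"
proof -
  obtain c where c: "\<forall>i<m. c i \<in> R" "\<forall>i\<ge>m. c i = 0" "z = (\<Sum>i<m. c i * \<theta> ^ i)"
    using theta_basis unfolding R_basis_def by blast
  define f where "f = (\<Sum>i<m. monom (c i) i)"
  have cf: "coeff f i = c i" for i unfolding f_def coeff_sum_monom using c by auto
  have "m \<noteq> 0" using h_irred degree_h unfolding irred_mod_def by auto
  then have df: "degree f < m"
    using c(2) by (intro degree_lessI) (auto simp: cf)
  have pf: "poly f \<theta> = z" using poly_eq_sum_lessThan[OF df] c by (simp add: cf)
  have Rf: "poly_over R f" unfolding poly_over_def cf using c by (metis zero_mem not_le)
  show ?thesis
  proof (cases "\<exists>i. coeff f i \<notin> max_ideal R")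
    case True
    then have "poly f \<theta> \<in> S_units"
      using poly_S_units_if_coeff_unit[OF Rf] monic_poly_theta_S_units df by force
    then show ?thesis using assms pf by simp
  next
    case False
    then show ?thesis using poly_max_ideal_coeffs[of f \<theta>] pf by auto
  qed
qed

lemma pi_power_unit_decomposition:
  assumes "z \<noteq> 0"
  obtains k u where "u \<in> S_units" "z = \<pi> ^ k * u"
proof -
  obtain K where K: "\<pi> ^ K \<noteq> 0" "\<pi> ^ Suc K = 0" by (rule pi_power_order)
  define D where "D = {k. \<exists>w. z = \<pi> ^ k * w}"
  have "D \<subseteq> {..K}"
  proof
    fix k assume "k \<in> D"
    then obtain w where w: "z = \<pi> ^ k * w" unfolding D_def by blast
    show "k \<in> {..K}"
    proof (rule ccontr)
      assume "k \<notin> {..K}"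
      then have "k = Suc K + (k - Suc K)" by simp
      then have "\<pi> ^ k = \<pi> ^ Suc K * \<pi> ^ (k - Suc K)" by (metis power_add)
      then show False using w K(2) assms by simp
    qed
  qed
  then have finD: "finite D" by (rule finite_subset) simp
  have "0 \<in> D" unfolding D_def by auto
  define k where "k = Max D"
  have "k \<in> D" unfolding k_def using finD \<open>0 \<in> D\<close> by (intro Max_in) auto
  then obtain u where u: "z = \<pi> ^ k * u" unfolding D_def by blast
  have "u \<in> S_units"
  proof (rule ccontr)
    assume "u \<notin> S_units"
    then obtain w where "u = \<pi> * w" using pi_dvd_non_unit by blast
    then have "z = \<pi> ^ Suc k * w" using u by (simp add: ac_simps)
    then have "Suc k \<in> D" unfolding D_def by blast
    then show False using Max_ge[OF finD] unfolding k_def[symmetric] by fastforce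
  qed
  then show ?thesis using u that by blast
qed

lemma sigma_twist: "\<exists>\<alpha>. \<sigma> z * a = \<alpha> * z"
proof (cases "z = 0")
  case True
  then show ?thesis by (simp add: sigma_zero)
next
  case False
  then obtain k u where u: "u \<in> S_units" "z = \<pi> ^ k * u"
    by (rule pi_power_unit_decomposition)
  have "\<sigma> (\<pi> ^ k) = \<pi> ^ k" using sigma_fixed_iff pi_mem by blast
  then have "\<sigma> z * a = (\<sigma> u * a * \<pi> ^ k) * (sinv u * u)"
    using sinv_left[OF u(1)] by (simp add: u(2) sigma_mult ac_simps)
  also have "\<dots> = (\<sigma> u * a * sinv u) * z"
    by (simp add: u(2) ac_simps)
  finally show ?thesis by blast
qed

lemma R_lin_indep_S_units:
  assumes li: "R_lin_indep R N v" and j: "j \<in> {1..N}"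
  shows "v j \<in> S_units"
proof (rule ccontr)
  assume "v j \<notin> S_units"
  then obtain w where w: "v j = \<pi> * w" using pi_dvd_non_unit by blast
  obtain K where K: "\<pi> ^ K \<noteq> 0" "\<pi> ^ Suc K = 0" by (rule pi_power_order)
  define c where "c i = (if i = j then \<pi> ^ K else 0)" for i
  have "(\<Sum>i=1..N. c i * v i) = \<pi> ^ K * v j"
    unfolding c_def using j by (simp add: if_distrib[of "\<lambda>z. z * _"] sum.delta cong: if_cong)
  also have "\<dots> = \<pi> ^ Suc K * w" using w by (simp add: ac_simps)
  also have "\<dots> = 0" using K(2) by simp
  finally have "(\<Sum>i=1..N. c i * v i) = 0" .
  moreover have "\<forall>i\<in>{1..N}. c i \<in> R" unfolding c_def using power_mem[OF pi_mem] by auto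
  ultimately have "\<forall>i\<in>{1..N}. c i = 0" using li unfolding R_lin_indep_def by blast
  then have "c j = 0" using j by blast
  then show False using K(1) unfolding c_def by simp
qed

end

section \<open>Decoding linearized Reed--Solomon codes\<close>

context ring_automorphism
begin

lemma skew_mult_monic_nonzero:
  assumes "lead_coeff L = 1" "F \<noteq> 0"
  shows "skew_mult \<sigma> L F \<noteq> 0"
proof -
  have "(\<sigma> ^^ degree L) (lead_coeff F) \<noteq> 0"
    using assms(2) sigma_iter_inj[of "degree L" "lead_coeff F" 0] sigma_iter_zero[of "degree L"] by auto
  then have "coeff (skew_mult \<sigma> L F) (degree L + degree F) \<noteq> 0"
    unfolding coeff_skew_mult_degree_sum using assms(1) by simp
  then show ?thesis by auto
qed

lemma LRS_code_message_poly:
  assumes c: "c \<in> LRS_code \<sigma> k l nb a \<beta>"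
    and b: "\<forall>i\<in>{1..l}. \<forall>j\<in>{1..nb i}. b i j = \<sigma> (\<beta> i j) * a i * sinv (\<beta> i j)"
    and units: "\<forall>i\<in>{1..l}. \<forall>j\<in>{1..nb i}. \<beta> i j \<in> S_units"
  shows "\<exists>F. degree F \<le> k - 1 \<and> ((\<exists>i\<in>{1..l}. \<exists>j\<in>{1..nb i}. c i j \<noteq> 0) \<longrightarrow> F \<noteq> 0) \<and>
    (\<forall>i\<in>{1..l}. \<forall>j\<in>{1..nb i}. skew_eval \<sigma> F (b i j) = c i j * sinv (\<beta> i j))"
proof -
  obtain u where u: "\<forall>i\<in>{1..l}. \<forall>j\<in>{1..nb i}. c i j = (\<Sum>s<k. u s * Dop \<sigma> s (a i) (\<beta> i j))"
    using c unfolding LRS_code_def by blast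
  define F where "F = (\<Sum>s<k. monom (u s) s)"
  have cF: "coeff F s = (if s < k then u s else 0)" for s
    unfolding F_def by (rule coeff_sum_monom)
  have "degree F \<le> k - 1" by (rule degree_le) (auto simp: cF)
  moreover have "F \<noteq> 0" if "\<exists>i\<in>{1..l}. \<exists>j\<in>{1..nb i}. c i j \<noteq> 0"
  proof
    assume "F = 0"
    then have "\<forall>s<k. u s = 0" using cF by (metis coeff_0)
    then show False using that u by auto
  qed
  moreover have "skew_eval \<sigma> F (b i j) = c i j * sinv (\<beta> i j)"
    if ij: "i \<in> {1..l}" "j \<in> {1..nb i}" for i j
  proof -
    have "skew_eval \<sigma> F (b i j) = (\<Sum>s<k + Suc (degree F). coeff F s * Nrm \<sigma> s (b i j))"
      by (rule skew_eval_eq_sum_lessThan) simp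
    also have "\<dots> = (\<Sum>s<k. coeff F s * Nrm \<sigma> s (b i j))"
      by (rule sum.mono_neutral_right) (auto simp: cF)
    also have "\<dots> = (\<Sum>s<k. u s * Nrm \<sigma> s (b i j))"
      by (simp add: cF)
    also have "\<dots> = (\<Sum>s<k. u s * Dop \<sigma> s (a i) (\<beta> i j)) * sinv (\<beta> i j)"
      unfolding b[rule_format, OF ij] Nrm_sconj[OF units[rule_format, OF ij]] Dop_def sum_distrib_right
      by (simp add: mult_ac)
    finally show ?thesis using u ij by simp
  qed
  ultimately show ?thesis by blast
qed

lemma skew_eval_skew_mult_eq_if_annihilates:
  assumes \<beta>: "\<beta> \<in> S_units" and b: "b = \<sigma> \<beta> * a * sinv \<beta>"
    and P: "skew_eval \<sigma> P b = (c + e) * sinv \<beta>" and P': "skew_eval \<sigma> P' b = c * sinv \<beta>"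
    and L: "D_eval a L e = 0"
  shows "skew_eval \<sigma> (skew_mult \<sigma> L P) b = skew_eval \<sigma> (skew_mult \<sigma> L P') b"
proof -
  have "(skew_eval \<sigma> P b - skew_eval \<sigma> P' b) * \<beta> = e * (sinv \<beta> * \<beta>)"
    unfolding P P' by (simp add: algebra_simps)
  then have "skew_eval \<sigma> P b * \<beta> - skew_eval \<sigma> P' b * \<beta> = e"
    using sinv_left[OF \<beta>] by (simp add: left_diff_distrib)
  then have "D_eval a L (skew_eval \<sigma> P b * \<beta>) - D_eval a L (skew_eval \<sigma> P' b * \<beta>) = 0"
    using L D_eval_diff[of a L "skew_eval \<sigma> P b * \<beta>" "skew_eval \<sigma> P' b * \<beta>"] by simp
  then show ?thesis
    unfolding skew_eval_skew_mult_sconj[OF \<beta> b] by (simp add: left_diff_distrib[symmetric])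
qed

end

context galois_extension
begin

lemma sum_rank_generators:
  "\<exists>g Q. (\<forall>i. mat_over R (nb i) (nb i) (Q i)) \<and>
     (\<forall>i. card {j. j < nb i \<and> g i j \<noteq> 0} \<le> rk R m (nb i) (\<lambda>j. e i (Suc j))) \<and>
     (\<forall>i k. k < nb i \<longrightarrow> e i (Suc k) = (\<Sum>j<nb i. Q i j k * g i j))"
proof -
  have "\<forall>i. \<exists>g Q. mat_over R (nb i) (nb i) Q \<and>
      card {j. j < nb i \<and> g j \<noteq> 0} \<le> rk R m (nb i) (\<lambda>j. e i (Suc j)) \<and>
      (\<forall>k<nb i. e i (Suc k) = (\<Sum>j<nb i. Q j k * g j))"
    using rk_generators[OF theta_basis] by blast
  then obtain g where "\<forall>i. \<exists>Q. mat_over R (nb i) (nb i) Q \<and>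
      card {j. j < nb i \<and> g i j \<noteq> 0} \<le> rk R m (nb i) (\<lambda>j. e i (Suc j)) \<and>
      (\<forall>k<nb i. e i (Suc k) = (\<Sum>j<nb i. Q j k * g i j))"
    by (auto dest!: choice)
  then obtain Q where "\<forall>i. mat_over R (nb i) (nb i) (Q i) \<and>
      card {j. j < nb i \<and> g i j \<noteq> 0} \<le> rk R m (nb i) (\<lambda>j. e i (Suc j)) \<and>
      (\<forall>k<nb i. e i (Suc k) = (\<Sum>j<nb i. Q i j k * g i j))"
    by (auto dest!: choice)
  then show ?thesis by blast
qed

lemma error_annihilator:
  "\<exists>L. lead_coeff L = 1 \<and> degree L \<le> wt_SR R m l nb e \<and>
     (\<forall>i\<in>{1..l}. \<forall>j\<in>{1..nb i}. D_eval (a i) L (e i j) = 0)"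
proof -
  obtain g Q where Q: "\<forall>i. mat_over R (nb i) (nb i) (Q i)"
    and card_g: "\<forall>i. card {j. j < nb i \<and> g i j \<noteq> 0} \<le> rk R m (nb i) (\<lambda>j. e i (Suc j))"
    and e_g: "\<forall>i k. k < nb i \<longrightarrow> e i (Suc k) = (\<Sum>j<nb i. Q i j k * g i j)"
    using sum_rank_generators[of nb e] by (elim exE conjE)
  define P where "P = (\<Union>i\<in>{1..l}. (\<lambda>j. (a i, g i j)) ` {j. j < nb i \<and> g i j \<noteq> 0})"
  have "card P \<le> (\<Sum>i=1..l. card ((\<lambda>j. (a i, g i j)) ` {j. j < nb i \<and> g i j \<noteq> 0}))"
    unfolding P_def by (rule card_UN_le) simp
  also have "\<dots> \<le> (\<Sum>i=1..l. rk R m (nb i) (\<lambda>j. e i (Suc j)))"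
    using card_g by (intro sum_mono order_trans[OF card_image_le]) auto
  finally have card_P: "card P \<le> wt_SR R m l nb e" unfolding wt_SR_def .
  obtain L where L: "lead_coeff L = 1" "degree L = card P" "\<forall>(a, y)\<in>P. D_eval a L y = 0"
    using exists_monic_annihilator[OF sigma_twist finite] by blast
  have L_g: "D_eval (a i) L (g i j) = 0" if "i \<in> {1..l}" "j < nb i" for i j
  proof (cases "g i j = 0")
    case False
    then have "(a i, g i j) \<in> P" unfolding P_def using that by blast
    then show ?thesis using L(3) by blast
  qed (simp add: D_eval_zero)
  have "D_eval (a i) L (e i j) = 0" if i: "i \<in> {1..l}" and j: "j \<in> {1..nb i}" for i j
  proof -
    have Q_fixed: "\<forall>j'<nb i. \<sigma> (Q i j' (j - 1)) = Q i j' (j - 1)"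
      using Q j unfolding mat_over_def sigma_fixed_iff by auto
    have jj: "j - 1 < nb i" "Suc (j - 1) = j" using j by auto
    have "e i j = (\<Sum>j'<nb i. Q i j' (j - 1) * g i j')"
      using e_g jj by metis
    then have "D_eval (a i) L (e i j) = (\<Sum>j'<nb i. Q i j' (j - 1) * D_eval (a i) L (g i j'))"
      by (simp only: D_eval_linear[OF Q_fixed])
    also have "\<dots> = 0" using L_g[OF i] by simp
    finally show ?thesis .
  qed
  then show ?thesis using L(1,2) card_P by (intro exI[of _ L]) auto
qed

end

theorem lemma7:
  fixes R :: "'a::{comm_ring_1,finite} set" and h :: "'a poly" and m :: nat and \<theta> :: 'a
    and \<sigma> :: "'a \<Rightarrow> 'a" and l :: nat and nb :: "nat \<Rightarrow> nat" and n k t :: nat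
    and a :: "nat \<Rightarrow> 'a" and \<beta> b c e r :: "nat \<Rightarrow> nat \<Rightarrow> 'a" and F G H :: "'a poly"
  assumes setting: "galois_setting R h m \<theta> \<sigma>"
    and n_def: "n = (\<Sum>i=1..l. nb i)"
    and a_units: "\<forall>i\<in>{1..l}. a i \<in> S_units"
    and cond_i: "\<forall>\<gamma>\<in>S_units. \<forall>i j. 1 \<le> i \<and> i < j \<and> j \<le> l \<longrightarrow> a i - sconj \<sigma> (a j) \<gamma> \<in> S_units"
    and cond_ii: "\<forall>i\<in>{1..l}. R_lin_indep R (nb i) (\<beta> i)"
    and b_def: "\<forall>i\<in>{1..l}. \<forall>j\<in>{1..nb i}. b i j = \<sigma> (\<beta> i j) * a i * sinv (\<beta> i j)"
    and k_ge: "1 \<le> k" and k_le: "k \<le> n - 1"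
    and t_def: "t = (n - k) div 2"
    and c_code: "c \<in> LRS_code \<sigma> k l nb a \<beta>"
    and e_wt: "wt_SR R m l nb e \<le> t"
    and r_def: "\<forall>i\<in>{1..l}. \<forall>j\<in>{1..nb i}. r i j = c i j + e i j"
    and F_deg: "degree F < n"
    and F_int: "\<forall>i\<in>{1..l}. \<forall>j\<in>{1..nb i}. skew_eval \<sigma> F (b i j) = c i j * sinv (\<beta> i j)"
    and G_deg: "degree G < n"
    and G_int: "\<forall>i\<in>{1..l}. \<forall>j\<in>{1..nb i}. skew_eval \<sigma> G (b i j) = e i j * sinv (\<beta> i j)"
    and H_deg: "degree H < n"
    and H_int: "\<forall>i\<in>{1..l}. \<forall>j\<in>{1..nb i}. skew_eval \<sigma> H (b i j) = r i j * sinv (\<beta> i j)"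
  shows "(\<exists>L. L \<noteq> 0 \<and> lead_coeff L = 1 \<and> degree L \<le> t \<and>
            (\<forall>i\<in>{1..l}. \<forall>j\<in>{1..nb i}.
               skew_eval \<sigma> (skew_mult \<sigma> L H) (b i j) = skew_eval \<sigma> (skew_mult \<sigma> L F) (b i j)))
       \<and> (\<exists>L Q. L \<noteq> 0 \<and> lead_coeff L = 1 \<and> degree L \<le> t \<and> degree Q \<le> t + k - 1 \<and>
            ((\<exists>i\<in>{1..l}. \<exists>j\<in>{1..nb i}. c i j \<noteq> 0) \<longrightarrow> Q \<noteq> 0) \<and>
            (\<forall>i\<in>{1..l}. \<forall>j\<in>{1..nb i}.
               skew_eval \<sigma> (skew_mult \<sigma> L H) (b i j) = skew_eval \<sigma> Q (b i j)))"
proof -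
  interpret galois_extension R h m \<theta> \<sigma> by (rule galois_extension.intro) (rule setting)
  have \<beta>_units: "\<forall>i\<in>{1..l}. \<forall>j\<in>{1..nb i}. \<beta> i j \<in> S_units"
    using cond_ii R_lin_indep_S_units by blast
  obtain L where L: "lead_coeff L = 1" "degree L \<le> wt_SR R m l nb e"
    and L_e: "\<forall>i\<in>{1..l}. \<forall>j\<in>{1..nb i}. D_eval (a i) L (e i j) = 0"
    using error_annihilator by blast
  have LH: "skew_eval \<sigma> (skew_mult \<sigma> L H) (b i j) = skew_eval \<sigma> (skew_mult \<sigma> L P) (b i j)"
    if "i \<in> {1..l}" "j \<in> {1..nb i}" "skew_eval \<sigma> P (b i j) = c i j * sinv (\<beta> i j)" for i j P
    using skew_eval_skew_mult_eq_if_annihilates[of "\<beta> i j" "b i j" "a i" H "c i j" "e i j" P L]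
      that \<beta>_units b_def H_int r_def L_e by auto
  obtain F' where F': "degree F' \<le> k - 1" "(\<exists>i\<in>{1..l}. \<exists>j\<in>{1..nb i}. c i j \<noteq> 0) \<longrightarrow> F' \<noteq> 0"
    "\<forall>i\<in>{1..l}. \<forall>j\<in>{1..nb i}. skew_eval \<sigma> F' (b i j) = c i j * sinv (\<beta> i j)"
    using LRS_code_message_poly[OF c_code b_def \<beta>_units] by blast
  have L_ne: "L \<noteq> 0" and deg_L: "degree L \<le> t" using L e_wt by auto
  then have "degree (skew_mult \<sigma> L F') \<le> t + k - 1"
    using degree_skew_mult_le[of L F'] F'(1) k_ge by linarith
  moreover have "\<forall>i\<in>{1..l}. \<forall>j\<in>{1..nb i}.
      skew_eval \<sigma> (skew_mult \<sigma> L H) (b i j) = skew_eval \<sigma> (skew_mult \<sigma> L F) (b i j)"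
    "\<forall>i\<in>{1..l}. \<forall>j\<in>{1..nb i}.
      skew_eval \<sigma> (skew_mult \<sigma> L H) (b i j) = skew_eval \<sigma> (skew_mult \<sigma> L F') (b i j)"
    using LH F_int F'(3) by simp_all
  ultimately show ?thesis
    using L_ne deg_L L(1) F'(2) skew_mult_monic_nonzero[OF L(1)] by blast
qed

end
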